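(* Let $V$ be a nonlocal vertex algebra and let $F=\{F_n\}_{n\in\mathbb{Z}}$ be an increasing filtration of $V$ with $\mathbf{1}\in F_0$ such that $a_mF_n\subset F_{k+n-m-1}$ for all $a\in F_k$ and $k,m,n\in\mathbb{Z}$. Then the graded space $\mathrm{Gr}_F(V)=\coprod_{n\in\mathbb{Z}}F_n/F_{n-1}$ is a $\mathbb{Z}$-graded nonlocal vertex algebra with vacuum vector $\mathbf{1}+F_{-1}$ and with $(a+F_{m-1})_k(b+F_{n-1})=a_kb+F_{m+n-k-2}$ for $a\in F_m$, $b\in F_n$, $m,n,k\in\mathbb{Z}$. Furthermore, if $F$ is the filtration associated with a generating subset $T$ of $V$, then $\{u+F_0\mid u\in T\}\subset F_1/F_0$ is a generating subset of $\mathrm{Gr}_F(V)$.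
   Context: A nonlocal vertex algebra is a complex vector space $V$ with vector $\mathbf{1}$ and linear $Y:V\to\mathrm{Hom}(V,V((x)))$, $Y(v,x)=\sum_nv_nx^{-n-1}$, such that $Y(\mathbf{1},x)v=v$, $Y(v,x)\mathbf{1}\in V[[x]]$ with constant term $v$, and for $u,v,w$ there is $l\ge0$ with $(x_0+x_2)^lY(u,x_0+x_2)Y(v,x_2)w=(x_0+x_2)^lY(Y(u,x_0)v,x_2)w$. A generating subset $T$ is one such that the smallest nonlocal vertex subalgebra containing $T$ is $V$. A $\mathbb{Z}$-graded nonlocal vertex algebra is a nonlocal vertex algebra $U=\coprod_nU_{(n)}$ with $\mathbf{1}\in U_{(0)}$ and $u_kv\in U_{(m+n-k-1)}$ for $u\in U_{(m)},v\in U_{(n)}$. An increasing filtration is a family of subspaces with $F_n\subset F_{n+1}$. The filtration associated with a generating subset $T$: $F_n$ is the span of $u^{(1)}_{m_1}\cdots u^{(r)}_{m_r}\mathbf{1}$ with $u^{(i)}\in T$, $m_i\in\mathbb{Z}$, $m_1+\cdots+m_r\ge-n$, where $r\ge1$ if $n<0$ and $r\ge0$ if $n\ge0$ (this filtration satisfies the hypotheses above). *)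

theory Defs
  imports Complex_Main "HOL-Algebra.Module"
begin

definition CR :: "complex ring" where
  "CR = \<lparr>carrier = UNIV, mult = (*), one = 1, zero = 0, add = (+)\<rparr>"

text \<open>A complex vector space is a module over CR (record type (complex, 'v) module).
  Vertex operators are given by their modes: Y u n v is u_n v, where
  Y(u,x) v = sum_n u_n v x^(-n-1).\<close>

type_synonym 'v vop = "'v \<Rightarrow> int \<Rightarrow> 'v \<Rightarrow> 'v"

text \<open>Coefficient of x0^a x2^b in (x0+x2)^l Y(u,x0+x2) Y(v,x2) w.
  Only finitely many j contribute (those with v_(j-b-1) w nonzero), by truncation.\<close>
definition assoc_lhs :: "(complex, 'v) module \<Rightarrow> 'v vop \<Rightarrow> nat \<Rightarrow> 'v \<Rightarrow> 'v \<Rightarrow> 'v \<Rightarrow> int \<Rightarrow> int \<Rightarrow> 'v" where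
  "assoc_lhs M Y l u v w a b =
     finsum M (\<lambda>j::nat. ((of_int (a + int j) :: complex) gchoose j) \<odot>\<^bsub>M\<^esub>
                         Y u (int l - 1 - int j - a) (Y v (int j - b - 1) w))
              {j::nat. Y v (int j - b - 1) w \<noteq> \<zero>\<^bsub>M\<^esub>}"

text \<open>Coefficient of x0^a x2^b in (x0+x2)^l Y(Y(u,x0)v,x2) w.\<close>
definition assoc_rhs :: "(complex, 'v) module \<Rightarrow> 'v vop \<Rightarrow> nat \<Rightarrow> 'v \<Rightarrow> 'v \<Rightarrow> 'v \<Rightarrow> int \<Rightarrow> int \<Rightarrow> 'v" where
  "assoc_rhs M Y l u v w a b =
     finsum M (\<lambda>i::nat. (of_nat (l choose i) :: complex) \<odot>\<^bsub>M\<^esub>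
                         Y (Y u (int l - int i - 1 - a) v) (int i - b - 1) w)
              {0..l}"

definition nonlocal_va :: "(complex, 'v) module \<Rightarrow> 'v \<Rightarrow> 'v vop \<Rightarrow> bool" where
  "nonlocal_va M vac Y \<longleftrightarrow>
     module CR M \<and> vac \<in> carrier M \<and>
     (\<forall>u\<in>carrier M. \<forall>v\<in>carrier M. \<forall>n. Y u n v \<in> carrier M) \<and>
     \<comment> \<open>Y is linear in u and each Y(u,x) is linear in v\<close>
     (\<forall>u\<in>carrier M. \<forall>u'\<in>carrier M. \<forall>v\<in>carrier M. \<forall>n.
        Y (u \<oplus>\<^bsub>M\<^esub> u') n v = Y u n v \<oplus>\<^bsub>M\<^esub> Y u' n v) \<and>
     (\<forall>c::complex. \<forall>u\<in>carrier M. \<forall>v\<in>carrier M. \<forall>n.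
        Y (c \<odot>\<^bsub>M\<^esub> u) n v = c \<odot>\<^bsub>M\<^esub> Y u n v) \<and>
     (\<forall>u\<in>carrier M. \<forall>v\<in>carrier M. \<forall>v'\<in>carrier M. \<forall>n.
        Y u n (v \<oplus>\<^bsub>M\<^esub> v') = Y u n v \<oplus>\<^bsub>M\<^esub> Y u n v') \<and>
     (\<forall>c::complex. \<forall>u\<in>carrier M. \<forall>v\<in>carrier M. \<forall>n.
        Y u n (c \<odot>\<^bsub>M\<^esub> v) = c \<odot>\<^bsub>M\<^esub> Y u n v) \<and>
     \<comment> \<open>Y(u,x)v \<in> V((x))\<close>
     (\<forall>u\<in>carrier M. \<forall>v\<in>carrier M. \<exists>N. \<forall>n\<ge>N. Y u n v = \<zero>\<^bsub>M\<^esub>) \<and>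
     \<comment> \<open>Y(1,x)v = v\<close>
     (\<forall>v\<in>carrier M. \<forall>n. Y vac n v = (if n = -1 then v else \<zero>\<^bsub>M\<^esub>)) \<and>
     \<comment> \<open>Y(v,x)1 \<in> V[[x]] with constant term v\<close>
     (\<forall>v\<in>carrier M. (\<forall>n\<ge>0. Y v n vac = \<zero>\<^bsub>M\<^esub>) \<and> Y v (-1) vac = v) \<and>
     \<comment> \<open>weak associativity\<close>
     (\<forall>u\<in>carrier M. \<forall>v\<in>carrier M. \<forall>w\<in>carrier M. \<exists>l::nat. \<forall>a b.
        assoc_lhs M Y l u v w a b = assoc_rhs M Y l u v w a b)"

definition direct_sum_decomp :: "(complex, 'v) module \<Rightarrow> (int \<Rightarrow> 'v set) \<Rightarrow> bool" where
  "direct_sum_decomp M G \<longleftrightarrow>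
     (\<forall>n. submodule (G n) CR M) \<and>
     (\<forall>x\<in>carrier M. \<exists>!f. (\<forall>n. f n \<in> G n) \<and> finite {n. f n \<noteq> \<zero>\<^bsub>M\<^esub>} \<and>
                            x = finsum M f {n. f n \<noteq> \<zero>\<^bsub>M\<^esub>})"

definition graded_nonlocal_va :: "(complex, 'v) module \<Rightarrow> 'v \<Rightarrow> 'v vop \<Rightarrow> (int \<Rightarrow> 'v set) \<Rightarrow> bool" where
  "graded_nonlocal_va M vac Y G \<longleftrightarrow>
     nonlocal_va M vac Y \<and> direct_sum_decomp M G \<and> vac \<in> G 0 \<and>
     (\<forall>m n k u v. u \<in> G m \<longrightarrow> v \<in> G n \<longrightarrow> Y u k v \<in> G (m + n - k - 1))"

definition nonlocal_subalgebra :: "(complex, 'v) module \<Rightarrow> 'v \<Rightarrow> 'v vop \<Rightarrow> 'v set \<Rightarrow> bool" where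
  "nonlocal_subalgebra M vac Y S \<longleftrightarrow>
     submodule S CR M \<and> vac \<in> S \<and> (\<forall>u\<in>S. \<forall>v\<in>S. \<forall>n. Y u n v \<in> S)"

definition generating_subset :: "(complex, 'v) module \<Rightarrow> 'v \<Rightarrow> 'v vop \<Rightarrow> 'v set \<Rightarrow> bool" where
  "generating_subset M vac Y T \<longleftrightarrow>
     T \<subseteq> carrier M \<and>
     carrier M = \<Inter>{S. nonlocal_subalgebra M vac Y S \<and> T \<subseteq> S}"

definition lin_span :: "(complex, 'v) module \<Rightarrow> 'v set \<Rightarrow> 'v set" where
  "lin_span M S = \<Inter>{H. submodule H CR M \<and> S \<subseteq> H}"

fun word_val :: "'v vop \<Rightarrow> 'v \<Rightarrow> ('v \<times> int) list \<Rightarrow> 'v" where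
  "word_val Y vac [] = vac"
| "word_val Y vac ((u, m) # ws) = Y u m (word_val Y vac ws)"

definition assoc_filtration :: "(complex, 'v) module \<Rightarrow> 'v \<Rightarrow> 'v vop \<Rightarrow> 'v set \<Rightarrow> int \<Rightarrow> 'v set" where
  "assoc_filtration M vac Y T n =
     lin_span M {word_val Y vac ws | ws. set (map fst ws) \<subseteq> T \<and>
                   sum_list (map snd ws) \<ge> - n \<and> (n < 0 \<longrightarrow> ws \<noteq> [])}"

definition vcoset :: "(complex, 'v) module \<Rightarrow> 'v set \<Rightarrow> 'v \<Rightarrow> 'v set" where
  "vcoset M S x = {x \<oplus>\<^bsub>M\<^esub> y | y. y \<in> S}"

text \<open>Elements of Gr_F(V) = coprod_n F_n/F_(n-1): families g with g n a coset x + F_(n-1),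
  x \<in> F_n, and g n = F_(n-1) (the zero coset) for all but finitely many n.\<close>
definition gr_carrier :: "(complex, 'v) module \<Rightarrow> (int \<Rightarrow> 'v set) \<Rightarrow> (int \<Rightarrow> 'v set) set" where
  "gr_carrier M F = {g. (\<forall>n. \<exists>x\<in>F n. g n = vcoset M (F (n - 1)) x) \<and> finite {n. g n \<noteq> F (n - 1)}}"

definition gr_zero :: "(int \<Rightarrow> 'v set) \<Rightarrow> int \<Rightarrow> 'v set" where
  "gr_zero F = (\<lambda>n. F (n - 1))"

definition gr_add :: "(complex, 'v) module \<Rightarrow> (int \<Rightarrow> 'v set) \<Rightarrow> (int \<Rightarrow> 'v set) \<Rightarrow> int \<Rightarrow> 'v set" where
  "gr_add M g h = (\<lambda>n. {x \<oplus>\<^bsub>M\<^esub> y | x y. x \<in> g n \<and> y \<in> h n})"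

definition gr_smult :: "(complex, 'v) module \<Rightarrow> (int \<Rightarrow> 'v set) \<Rightarrow> complex \<Rightarrow> (int \<Rightarrow> 'v set) \<Rightarrow> int \<Rightarrow> 'v set" where
  "gr_smult M F c g = (\<lambda>n. {(c \<odot>\<^bsub>M\<^esub> x) \<oplus>\<^bsub>M\<^esub> y | x y. x \<in> g n \<and> y \<in> F (n - 1)})"

text \<open>The module structure of Gr_F(V); the ring fields mult and one are unused junk.\<close>
definition Gr :: "(complex, 'v) module \<Rightarrow> (int \<Rightarrow> 'v set) \<Rightarrow> (complex, int \<Rightarrow> 'v set) module" where
  "Gr M F = \<lparr>carrier = gr_carrier M F, mult = (\<lambda>_ _. gr_zero F), one = gr_zero F,
             zero = gr_zero F, add = gr_add M, smult = gr_smult M F\<rparr>"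

definition gr_hom :: "(complex, 'v) module \<Rightarrow> (int \<Rightarrow> 'v set) \<Rightarrow> int \<Rightarrow> 'v \<Rightarrow> int \<Rightarrow> 'v set" where
  "gr_hom M F m x = (\<lambda>n. if n = m then vcoset M (F (m - 1)) x else F (n - 1))"

definition gr_grading :: "(complex, 'v) module \<Rightarrow> (int \<Rightarrow> 'v set) \<Rightarrow> int \<Rightarrow> (int \<Rightarrow> 'v set) set" where
  "gr_grading M F n = gr_hom M F n ` F n"

end

theory Submission
  imports Defs
begin

text \<open>
  Let R be the space of finitely supported families (x_n) with x_n in F_n, with vertex operator
  (x_k y)_D = \<Sum>_m (x_m)_k y_(D-m+k+1); the compatibility of F with Y keeps every component in
  the right F_D. All axioms of a nonlocal vertex algebra hold in R componentwise, since only
  finitely many components of the arguments are involved; for weak associativity one needs a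
  single exponent l that works for finitely many triples of components, and this exists because
  weak associativity with exponent l persists for every larger exponent (Pascal's rule). The map
  x \<mapsto> (x_n + F_(n-1))_n from R onto Gr_F(V) is linear and its kernel, the families with
  x_n in F_(n-1), is an ideal by compatibility, so the vertex operator descends to Gr_F(V)
  together with all the axioms.

  For the filtration associated with T, F_n is spanned by the words u1_m1 ... ur_mr 1 with
  m1 + ... + mr \<ge> -n. Such a word lies in F_(n-1) unless equality holds, and then its class in
  F_n/F_(n-1) is the corresponding iterated product of the classes u + F_0.
\<close>

lemma CR_simps [simp]:
  "carrier CR = UNIV" "a \<oplus>\<^bsub>CR\<^esub> b = a + b" "a \<otimes>\<^bsub>CR\<^esub> b = a * b" "\<one>\<^bsub>CR\<^esub> = 1" "\<zero>\<^bsub>CR\<^esub> = 0"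
  by (simp_all add: CR_def)

lemma smult_zero_CR: "module CR M \<Longrightarrow> x \<in> carrier M \<Longrightarrow> (0::complex) \<odot>\<^bsub>M\<^esub> x = \<zero>\<^bsub>M\<^esub>"
  using module.smult_l_null[of CR M x] by simp

lemma smult_zero_right_CR: "module CR M \<Longrightarrow> (c::complex) \<odot>\<^bsub>M\<^esub> \<zero>\<^bsub>M\<^esub> = \<zero>\<^bsub>M\<^esub>"
  using module.smult_r_null[of CR M c] by simp

lemma smult_add_distrib_CR:
  "module CR M \<Longrightarrow> x \<in> carrier M \<Longrightarrow> ((a::complex) + b) \<odot>\<^bsub>M\<^esub> x = a \<odot>\<^bsub>M\<^esub> x \<oplus>\<^bsub>M\<^esub> b \<odot>\<^bsub>M\<^esub> x"
  using module.smult_l_distr[of CR M a b x] by simp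

lemma smult_mult_CR:
  "module CR M \<Longrightarrow> x \<in> carrier M \<Longrightarrow> ((a::complex) * b) \<odot>\<^bsub>M\<^esub> x = a \<odot>\<^bsub>M\<^esub> (b \<odot>\<^bsub>M\<^esub> x)"
  using module.smult_assoc1[of CR M a b x] by simp

lemma smult_one_CR: "module CR M \<Longrightarrow> x \<in> carrier M \<Longrightarrow> (1::complex) \<odot>\<^bsub>M\<^esub> x = x"
  using module.smult_one[of CR M x] by simp

lemma module_hom_finsum:
  assumes M: "module CR M" and M': "module CR M'"
    and hom_add: "\<And>x y. x \<in> carrier M \<Longrightarrow> y \<in> carrier M \<Longrightarrow> \<phi> (x \<oplus>\<^bsub>M\<^esub> y) = \<phi> x \<oplus>\<^bsub>M'\<^esub> \<phi> y"
    and hom_zero: "\<phi> \<zero>\<^bsub>M\<^esub> = \<zero>\<^bsub>M'\<^esub>"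
    and hom_closed: "\<And>x. x \<in> carrier M \<Longrightarrow> \<phi> x \<in> carrier M'"
    and "finite A" and "f \<in> A \<rightarrow> carrier M"
  shows "\<phi> (finsum M f A) = finsum M' (\<lambda>i. \<phi> (f i)) A"
  using \<open>finite A\<close> \<open>f \<in> A \<rightarrow> carrier M\<close>
proof (induct A rule: finite_induct)
  case empty
  interpret M: module CR M by (rule M)
  interpret M': module CR M' by (rule M')
  show ?case using hom_zero by simp
next
  case (insert x A)
  interpret M: module CR M by (rule M)
  interpret M': module CR M' by (rule M')
  show ?case using insert by (simp add: hom_add hom_closed Pi_def)
qed

lemma finite_uniform_threshold:
  assumes "finite S" "\<And>s. s \<in> S \<Longrightarrow> \<exists>N::int. \<forall>n\<ge>N. P s n"
  shows "\<exists>N. \<forall>s\<in>S. \<forall>n\<ge>N. P s n"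
proof -
  have "eventually (\<lambda>n. \<forall>s\<in>S. P s n) at_top"
    using assms by (intro eventually_ball_finite) (auto simp: eventually_at_top_linorder)
  then show ?thesis by (auto simp: eventually_at_top_linorder)
qed

lemma (in abelian_monoid) finsum_swap:
  assumes "finite A" "finite B" "\<And>i j. i \<in> A \<Longrightarrow> j \<in> B \<Longrightarrow> f i j \<in> carrier G"
  shows "(\<Oplus>i\<in>A. \<Oplus>j\<in>B. f i j) = (\<Oplus>j\<in>B. \<Oplus>i\<in>A. f i j)"
  using assms(1,3)
proof (induct A rule: finite_induct)
  case empty
  then show ?case by (simp add: finsum_zero)
next
  case (insert x A)
  have "(\<Oplus>i\<in>insert x A. \<Oplus>j\<in>B. f i j) = (\<Oplus>j\<in>B. f x j) \<oplus> (\<Oplus>j\<in>B. \<Oplus>i\<in>A. f i j)"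
    using insert by (subst finsum_insert) (auto intro!: finsum_closed)
  also have "\<dots> = (\<Oplus>j\<in>B. f x j \<oplus> (\<Oplus>i\<in>A. f i j))"
    using insert by (intro finsum_addf[symmetric]) (auto intro!: finsum_closed)
  also have "\<dots> = (\<Oplus>j\<in>B. \<Oplus>i\<in>insert x A. f i j)"
    using insert by (intro finsum_cong') (auto intro!: finsum_closed simp: finsum_insert)
  finally show ?case .
qed

lemma (in abelian_monoid) finsum_shift_reindex:
  fixes c :: int
  assumes "finite E" "(\<lambda>n. n + c) ` A \<subseteq> E" "f \<in> E \<rightarrow> carrier G"
    and "\<And>e. e \<in> E \<Longrightarrow> e - c \<notin> A \<Longrightarrow> f e = \<zero>"
  shows "(\<Oplus>e\<in>E. f e) = (\<Oplus>n\<in>A. f (n + c))"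
proof -
  have "(\<Oplus>e\<in>E. f e) = (\<Oplus>e\<in>(\<lambda>n. n + c) ` A. f e)"
  proof (rule add.finprod_mono_neutral_cong_left[symmetric, OF assms(1,2)])
    fix e assume "e \<in> E - (\<lambda>n. n + c) ` A"
    moreover have "e = (e - c) + c" by simp
    ultimately show "f e = \<zero>" using assms(4) by blast
  qed (use assms(3) in auto)
  also have "\<dots> = (\<Oplus>n\<in>A. f (n + c))"
    using assms(2,3) by (intro finsum_reindex) (auto simp: inj_on_def)
  finally show ?thesis .
qed

lemma (in abelian_monoid) finsum_add_shifted:
  assumes "B \<in> {..Suc N} \<rightarrow> carrier G" "C \<in> {..Suc N} \<rightarrow> carrier G" "C 0 = \<zero>"
  shows "(\<Oplus>j\<in>{..Suc N}. B j \<oplus> C j) = (\<Oplus>j\<in>{..Suc N}. B j) \<oplus> (\<Oplus>i\<in>{..N}. C (Suc i))"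
proof -
  have "(\<Oplus>j\<in>{..Suc N}. C j) = (\<Oplus>i\<in>{..N}. C (Suc i)) \<oplus> C 0"
    by (rule finsum_Suc2) (use assms(2) in auto)
  also have "\<dots> = (\<Oplus>i\<in>{..N}. C (Suc i))"
    using assms(2,3) by (simp add: finsum_closed Pi_def)
  finally show ?thesis using assms(1,2) by (simp add: finsum_addf)
qed

lemma nonlocal_va_module: "nonlocal_va M vac Y \<Longrightarrow> module CR M"
  by (simp add: nonlocal_va_def)

lemma nonlocal_vaD:
  assumes "nonlocal_va M vac Y"
  shows nva_vacuum: "vac \<in> carrier M"
  and nva_Y_closed: "\<And>u v n. u \<in> carrier M \<Longrightarrow> v \<in> carrier M \<Longrightarrow> Y u n v \<in> carrier M"
  and nva_Y_add_left: "\<And>u u' v n. u \<in> carrier M \<Longrightarrow> u' \<in> carrier M \<Longrightarrow> v \<in> carrier M \<Longrightarrow>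
        Y (u \<oplus>\<^bsub>M\<^esub> u') n v = Y u n v \<oplus>\<^bsub>M\<^esub> Y u' n v"
  and nva_Y_smult_left: "\<And>c u v n. u \<in> carrier M \<Longrightarrow> v \<in> carrier M \<Longrightarrow>
        Y (c \<odot>\<^bsub>M\<^esub> u) n v = c \<odot>\<^bsub>M\<^esub> Y u n v"
  and nva_Y_add_right: "\<And>u v v' n. u \<in> carrier M \<Longrightarrow> v \<in> carrier M \<Longrightarrow> v' \<in> carrier M \<Longrightarrow>
        Y u n (v \<oplus>\<^bsub>M\<^esub> v') = Y u n v \<oplus>\<^bsub>M\<^esub> Y u n v'"
  and nva_Y_smult_right: "\<And>c u v n. u \<in> carrier M \<Longrightarrow> v \<in> carrier M \<Longrightarrow>
        Y u n (c \<odot>\<^bsub>M\<^esub> v) = c \<odot>\<^bsub>M\<^esub> Y u n v"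
  and nva_truncation: "\<And>u v. u \<in> carrier M \<Longrightarrow> v \<in> carrier M \<Longrightarrow> \<exists>N. \<forall>n\<ge>N. Y u n v = \<zero>\<^bsub>M\<^esub>"
  and nva_vacuum_Y: "\<And>v n. v \<in> carrier M \<Longrightarrow> Y vac n v = (if n = -1 then v else \<zero>\<^bsub>M\<^esub>)"
  and nva_creation: "\<And>v n. v \<in> carrier M \<Longrightarrow> n \<ge> 0 \<Longrightarrow> Y v n vac = \<zero>\<^bsub>M\<^esub>"
  and nva_creation_constant: "\<And>v. v \<in> carrier M \<Longrightarrow> Y v (-1) vac = v"
  and nva_weak_assoc: "\<And>u v w. u \<in> carrier M \<Longrightarrow> v \<in> carrier M \<Longrightarrow> w \<in> carrier M \<Longrightarrow>
        \<exists>l::nat. \<forall>a b. assoc_lhs M Y l u v w a b = assoc_rhs M Y l u v w a b"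
  using assms unfolding nonlocal_va_def
  by (meson, meson, meson, meson, meson, meson, meson, meson, meson, meson, meson)

lemma nva_Y_zero_right:
  assumes nva: "nonlocal_va M vac Y" and "u \<in> carrier M"
  shows "Y u k \<zero>\<^bsub>M\<^esub> = \<zero>\<^bsub>M\<^esub>"
proof -
  interpret M: module CR M by (rule nonlocal_va_module[OF nva])
  have "Y u k \<zero>\<^bsub>M\<^esub> = Y u k ((0::complex) \<odot>\<^bsub>M\<^esub> \<zero>\<^bsub>M\<^esub>)" by simp
  also have "\<dots> = (0::complex) \<odot>\<^bsub>M\<^esub> Y u k \<zero>\<^bsub>M\<^esub>"
    by (rule nva_Y_smult_right[OF nva assms(2) M.zero_closed])
  finally show ?thesis using smult_zero_CR[OF M.module_axioms] nva_Y_closed[OF nva] assms(2) by simp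
qed

lemma nva_Y_zero_left:
  assumes nva: "nonlocal_va M vac Y" and "v \<in> carrier M"
  shows "Y \<zero>\<^bsub>M\<^esub> k v = \<zero>\<^bsub>M\<^esub>"
proof -
  interpret M: module CR M by (rule nonlocal_va_module[OF nva])
  have "Y \<zero>\<^bsub>M\<^esub> k v = Y ((0::complex) \<odot>\<^bsub>M\<^esub> \<zero>\<^bsub>M\<^esub>) k v" by simp
  also have "\<dots> = (0::complex) \<odot>\<^bsub>M\<^esub> Y \<zero>\<^bsub>M\<^esub> k v"
    by (rule nva_Y_smult_left[OF nva M.zero_closed assms(2)])
  finally show ?thesis using smult_zero_CR[OF M.module_axioms] nva_Y_closed[OF nva] assms(2) by simp
qed

lemma nva_Y_finsum_right:
  assumes nva: "nonlocal_va M vac Y" and "finite A" "u \<in> carrier M" "\<And>i. i \<in> A \<Longrightarrow> f i \<in> carrier M"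
  shows "Y u k (finsum M f A) = (\<Oplus>\<^bsub>M\<^esub>i\<in>A. Y u k (f i))"
  using assms nonlocal_va_module[OF nva]
  by (intro module_hom_finsum) (auto simp: nva_Y_add_right nva_Y_zero_right nva_Y_closed)

lemma nva_Y_finsum_left:
  assumes nva: "nonlocal_va M vac Y" and "finite A" "w \<in> carrier M" "\<And>i. i \<in> A \<Longrightarrow> f i \<in> carrier M"
  shows "Y (finsum M f A) k w = (\<Oplus>\<^bsub>M\<^esub>i\<in>A. Y (f i) k w)"
  using assms nonlocal_va_module[OF nva]
  by (intro module_hom_finsum[where \<phi> = "\<lambda>u. Y u k w"]) (auto simp: nva_Y_add_left nva_Y_zero_left nva_Y_closed)

lemma nva_modes_finite:
  assumes "nonlocal_va M vac Y" "v \<in> carrier M" "w \<in> carrier M"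
  shows "finite {j::nat. Y v (int j - b - 1) w \<noteq> \<zero>\<^bsub>M\<^esub>}"
proof -
  obtain N where "\<forall>n\<ge>N. Y v n w = \<zero>\<^bsub>M\<^esub>" using nva_truncation[OF assms] by meson
  then have "{j::nat. Y v (int j - b - 1) w \<noteq> \<zero>\<^bsub>M\<^esub>} \<subseteq> {..nat (N + b + 1)}"
    by (auto, smt (verit) of_nat_le_iff int_nat_eq)
  then show ?thesis using finite_subset by blast
qed

subsection \<open>Weak associativity\<close>

lemma assoc_lhs_eq_finsum:
  assumes M: "module CR M"
    and Y_closed: "\<And>u v k. u \<in> carrier M \<Longrightarrow> v \<in> carrier M \<Longrightarrow> Y u k v \<in> carrier M"
    and Y_zero: "\<And>k. Y u k \<zero>\<^bsub>M\<^esub> = \<zero>\<^bsub>M\<^esub>"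
    and uvw: "u \<in> carrier M" "v \<in> carrier M" "w \<in> carrier M"
    and K: "finite K" "{j. Y v (int j - b - 1) w \<noteq> \<zero>\<^bsub>M\<^esub>} \<subseteq> K"
  shows "assoc_lhs M Y l u v w a b = (\<Oplus>\<^bsub>M\<^esub>j\<in>K. ((of_int (a + int j) :: complex) gchoose j) \<odot>\<^bsub>M\<^esub>
           Y u (int l - 1 - int j - a) (Y v (int j - b - 1) w))"
proof -
  interpret M: module CR M by (rule M)
  show ?thesis unfolding assoc_lhs_def
    by (rule M.add.finprod_mono_neutral_cong_left[OF K])
       (use uvw Y_closed Y_zero smult_zero_right_CR[OF M] in \<open>auto simp: Pi_def\<close>)
qed

lemma assoc_lhs_Suc:
  assumes nva: "nonlocal_va M vac Y" and uvw: "u \<in> carrier M" "v \<in> carrier M" "w \<in> carrier M"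
  shows "assoc_lhs M Y (Suc l) u v w a b =
           assoc_lhs M Y l u v w (a - 1) b \<oplus>\<^bsub>M\<^esub> assoc_lhs M Y l u v w a (b - 1)"
proof -
  interpret M: module CR M by (rule nonlocal_va_module[OF nva])
  note Y_closed = nva_Y_closed[OF nva]
  have Y_zero: "\<And>k. Y u k \<zero>\<^bsub>M\<^esub> = \<zero>\<^bsub>M\<^esub>" using nva_Y_zero_right[OF nva uvw(1)] .
  obtain T where T: "\<forall>n\<ge>T. Y v n w = \<zero>\<^bsub>M\<^esub>" using nva_truncation[OF nva uvw(2,3)] by blast
  define N where "N = nat (T + b + 1)"
  have "Y v (int j - b - 1) w = \<zero>\<^bsub>M\<^esub>" "Y v (int j - (b - 1) - 1) w = \<zero>\<^bsub>M\<^esub>" if "j \<ge> N" for j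
    using T that unfolding N_def by auto
  then have supp_N: "{j. Y v (int j - b - 1) w \<noteq> \<zero>\<^bsub>M\<^esub>} \<subseteq> {..Suc N}"
      "{j. Y v (int j - (b - 1) - 1) w \<noteq> \<zero>\<^bsub>M\<^esub>} \<subseteq> {..N}"
    by (auto, meson le_SucI nat_le_linear, meson nat_le_linear)
  have expand:
    "assoc_lhs M Y l' u v w a' b = (\<Oplus>\<^bsub>M\<^esub>j\<in>{..Suc N}. ((of_int (a' + int j) :: complex) gchoose j) \<odot>\<^bsub>M\<^esub>
       Y u (int l' - 1 - int j - a') (Y v (int j - b - 1) w))"
    "assoc_lhs M Y l' u v w a' (b - 1) = (\<Oplus>\<^bsub>M\<^esub>j\<in>{..N}. ((of_int (a' + int j) :: complex) gchoose j) \<odot>\<^bsub>M\<^esub>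
       Y u (int l' - 1 - int j - a') (Y v (int j - (b - 1) - 1) w))" for l' a'
    by (simp_all add: assoc_lhs_eq_finsum[OF M.module_axioms Y_closed Y_zero uvw _ supp_N(1)]
      assoc_lhs_eq_finsum[OF M.module_axioms Y_closed Y_zero uvw _ supp_N(2)])
  define c :: "int \<Rightarrow> nat \<Rightarrow> complex" where "c a j = (of_int (a + int j) :: complex) gchoose j" for a j
  define R where "R j = Y u (int l - int j - a) (Y v (int j - b - 1) w)" for j
  have R_closed: "R j \<in> carrier M" for j unfolding R_def using uvw Y_closed by simp
  have c_zero: "c a' 0 = 1" for a' by (simp add: c_def)
  have pascal: "c a j = c (a - 1) j + c a (j - 1)" if "j > 0" for j
    using that gbinomial_Suc_Suc[of "of_int (a + int (j - 1)) :: complex" "j - 1"]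
    unfolding c_def by (simp add: algebra_simps of_nat_diff)
  have "assoc_lhs M Y (Suc l) u v w a b = (\<Oplus>\<^bsub>M\<^esub>j\<in>{..Suc N}. c a j \<odot>\<^bsub>M\<^esub> R j)"
    unfolding expand c_def R_def by (simp add: algebra_simps)
  also have "\<dots> = (\<Oplus>\<^bsub>M\<^esub>j\<in>{..Suc N}. c (a - 1) j \<odot>\<^bsub>M\<^esub> R j \<oplus>\<^bsub>M\<^esub>
                     (if j = 0 then \<zero>\<^bsub>M\<^esub> else c a (j - 1) \<odot>\<^bsub>M\<^esub> R j))"
    using R_closed by (intro M.finsum_cong') (auto simp: pascal c_zero smult_add_distrib_CR[OF M.module_axioms])
  also have "\<dots> = (\<Oplus>\<^bsub>M\<^esub>j\<in>{..Suc N}. c (a - 1) j \<odot>\<^bsub>M\<^esub> R j) \<oplus>\<^bsub>M\<^esub> (\<Oplus>\<^bsub>M\<^esub>i\<in>{..N}. c a i \<odot>\<^bsub>M\<^esub> R (Suc i))"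
    by (subst M.finsum_add_shifted) (use R_closed in auto)
  also have "\<dots> = assoc_lhs M Y l u v w (a - 1) b \<oplus>\<^bsub>M\<^esub> assoc_lhs M Y l u v w a (b - 1)"
    unfolding expand c_def R_def by (simp add: algebra_simps)
  finally show ?thesis .
qed

lemma assoc_rhs_Suc:
  assumes nva: "nonlocal_va M vac Y" and uvw: "u \<in> carrier M" "v \<in> carrier M" "w \<in> carrier M"
  shows "assoc_rhs M Y (Suc l) u v w a b =
           assoc_rhs M Y l u v w (a - 1) b \<oplus>\<^bsub>M\<^esub> assoc_rhs M Y l u v w a (b - 1)"
proof -
  interpret M: module CR M by (rule nonlocal_va_module[OF nva])
  define R where "R j = Y (Y u (int l - int j - a) v) (int j - b - 1) w" for j
  have R_closed: "R j \<in> carrier M" for j unfolding R_def using uvw nva_Y_closed[OF nva] by simp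
  have pascal: "of_nat (Suc l choose j) = (of_nat (l choose j) + of_nat (l choose (j - 1)) :: complex)"
    if "j > 0" for j
    using that by (cases j) simp_all
  have "assoc_rhs M Y (Suc l) u v w a b = (\<Oplus>\<^bsub>M\<^esub>j\<in>{..Suc l}. of_nat (Suc l choose j) \<odot>\<^bsub>M\<^esub> R j)"
    unfolding assoc_rhs_def R_def by (simp add: atLeast0AtMost algebra_simps)
  also have "\<dots> = (\<Oplus>\<^bsub>M\<^esub>j\<in>{..Suc l}. of_nat (l choose j) \<odot>\<^bsub>M\<^esub> R j \<oplus>\<^bsub>M\<^esub>
                     (if j = 0 then \<zero>\<^bsub>M\<^esub> else of_nat (l choose (j - 1)) \<odot>\<^bsub>M\<^esub> R j))"
    using R_closed by (intro M.finsum_cong') (auto simp: pascal smult_add_distrib_CR[OF M.module_axioms])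
  also have "\<dots> = (\<Oplus>\<^bsub>M\<^esub>j\<in>{..Suc l}. of_nat (l choose j) \<odot>\<^bsub>M\<^esub> R j) \<oplus>\<^bsub>M\<^esub>
                   (\<Oplus>\<^bsub>M\<^esub>i\<in>{..l}. of_nat (l choose i) \<odot>\<^bsub>M\<^esub> R (Suc i))"
    by (subst M.finsum_add_shifted) (use R_closed in auto)
  also have "(\<Oplus>\<^bsub>M\<^esub>j\<in>{..Suc l}. of_nat (l choose j) \<odot>\<^bsub>M\<^esub> R j) = (\<Oplus>\<^bsub>M\<^esub>j\<in>{..l}. of_nat (l choose j) \<odot>\<^bsub>M\<^esub> R j)"
    using R_closed by (simp add: M.finsum_Suc Pi_def binomial_eq_0 smult_zero_CR[OF M.module_axioms])
  also have "\<dots> \<oplus>\<^bsub>M\<^esub> (\<Oplus>\<^bsub>M\<^esub>i\<in>{..l}. of_nat (l choose i) \<odot>\<^bsub>M\<^esub> R (Suc i)) =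
               assoc_rhs M Y l u v w (a - 1) b \<oplus>\<^bsub>M\<^esub> assoc_rhs M Y l u v w a (b - 1)"
    unfolding assoc_rhs_def R_def by (simp add: atLeast0AtMost algebra_simps)
  finally show ?thesis .
qed

lemma weak_assoc_mono:
  assumes nva: "nonlocal_va M vac Y" and uvw: "u \<in> carrier M" "v \<in> carrier M" "w \<in> carrier M"
    and "\<forall>a b. assoc_lhs M Y l u v w a b = assoc_rhs M Y l u v w a b" and "l \<le> l'"
  shows "\<forall>a b. assoc_lhs M Y l' u v w a b = assoc_rhs M Y l' u v w a b"
proof -
  have "\<forall>a b. assoc_lhs M Y (l + d) u v w a b = assoc_rhs M Y (l + d) u v w a b" for d
    by (induct d) (simp_all add: assms(5) assoc_lhs_Suc[OF nva uvw] assoc_rhs_Suc[OF nva uvw])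
  from this[of "l' - l"] show ?thesis using \<open>l \<le> l'\<close> by simp
qed

lemma nva_weak_assoc_eventually:
  assumes nva: "nonlocal_va M vac Y" and uvw: "u \<in> carrier M" "v \<in> carrier M" "w \<in> carrier M"
  shows "eventually (\<lambda>l. \<forall>a b. assoc_lhs M Y l u v w a b = assoc_rhs M Y l u v w a b) sequentially"
proof -
  obtain l where "\<forall>a b. assoc_lhs M Y l u v w a b = assoc_rhs M Y l u v w a b"
    using nva_weak_assoc[OF nva uvw] by blast
  then show ?thesis unfolding eventually_sequentially using weak_assoc_mono[OF nva uvw] by blast
qed

lemma assoc_zero_right:
  assumes nva: "nonlocal_va M vac Y" and "u \<in> carrier M" "v \<in> carrier M"
  shows "assoc_lhs M Y l u v \<zero>\<^bsub>M\<^esub> a b = \<zero>\<^bsub>M\<^esub>" "assoc_rhs M Y l u v \<zero>\<^bsub>M\<^esub> a b = \<zero>\<^bsub>M\<^esub>"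
proof -
  interpret M: module CR M by (rule nonlocal_va_module[OF nva])
  show "assoc_lhs M Y l u v \<zero>\<^bsub>M\<^esub> a b = \<zero>\<^bsub>M\<^esub>"
    unfolding assoc_lhs_def using nva_Y_zero_right[OF nva \<open>v \<in> carrier M\<close>] by simp
  show "assoc_rhs M Y l u v \<zero>\<^bsub>M\<^esub> a b = \<zero>\<^bsub>M\<^esub>"
    unfolding assoc_rhs_def using assms nva_Y_zero_right[OF nva] nva_Y_closed[OF nva]
    by (simp add: M.finsum_zero smult_zero_right_CR[OF M.module_axioms])
qed

subsection \<open>Transport along surjective homomorphisms\<close>

locale nva_epimorphism =
  fixes M :: "(complex, 'a) module" and vac :: 'a and Y :: "'a vop"
    and M' :: "(complex, 'b) module" and Y' :: "'b vop" and \<phi> :: "'a \<Rightarrow> 'b"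
  assumes nva: "nonlocal_va M vac Y"
    and surj: "\<phi> ` carrier M = carrier M'"
    and hom_add: "\<And>x y. x \<in> carrier M \<Longrightarrow> y \<in> carrier M \<Longrightarrow> \<phi> (x \<oplus>\<^bsub>M\<^esub> y) = \<phi> x \<oplus>\<^bsub>M'\<^esub> \<phi> y"
    and hom_smult: "\<And>c x. x \<in> carrier M \<Longrightarrow> \<phi> (c \<odot>\<^bsub>M\<^esub> x) = c \<odot>\<^bsub>M'\<^esub> \<phi> x"
    and hom_zero: "\<phi> \<zero>\<^bsub>M\<^esub> = \<zero>\<^bsub>M'\<^esub>"
    and hom_Y: "\<And>u v k. u \<in> carrier M \<Longrightarrow> v \<in> carrier M \<Longrightarrow> \<phi> (Y u k v) = Y' (\<phi> u) k (\<phi> v)"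
begin

sublocale M: module CR M by (rule nonlocal_va_module[OF nva])

lemma hom_closed: "x \<in> carrier M \<Longrightarrow> \<phi> x \<in> carrier M'"
  using surj by blast

lemma carrier_image_cases:
  assumes "x' \<in> carrier M'"
  obtains x where "x \<in> carrier M" "x' = \<phi> x"
  using assms surj by blast

lemma module_image: "module CR M'"
proof (rule moduleI)
  show "cring CR" by (rule M.is_cring)
  show "abelian_group M'"
  proof (rule abelian_groupI)
    fix x' y' assume "x' \<in> carrier M'" "y' \<in> carrier M'"
    then obtain x y where "x \<in> carrier M" "y \<in> carrier M" "x' = \<phi> x" "y' = \<phi> y"
      by (metis carrier_image_cases)
    then show "x' \<oplus>\<^bsub>M'\<^esub> y' \<in> carrier M'" "x' \<oplus>\<^bsub>M'\<^esub> y' = y' \<oplus>\<^bsub>M'\<^esub> x'"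
      by (simp_all add: hom_add[symmetric] hom_closed M.add.m_comm)
  next
    show "\<zero>\<^bsub>M'\<^esub> \<in> carrier M'" using hom_closed[OF M.zero_closed] by (simp add: hom_zero)
  next
    fix x' y' z' assume "x' \<in> carrier M'" "y' \<in> carrier M'" "z' \<in> carrier M'"
    then obtain x y z where "x \<in> carrier M" "y \<in> carrier M" "z \<in> carrier M"
        "x' = \<phi> x" "y' = \<phi> y" "z' = \<phi> z"
      by (metis carrier_image_cases)
    then show "x' \<oplus>\<^bsub>M'\<^esub> y' \<oplus>\<^bsub>M'\<^esub> z' = x' \<oplus>\<^bsub>M'\<^esub> (y' \<oplus>\<^bsub>M'\<^esub> z')"
      by (simp add: hom_add[symmetric] M.add.m_assoc)
  next
    fix x' assume "x' \<in> carrier M'"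
    then obtain x where x: "x \<in> carrier M" "x' = \<phi> x" by (rule carrier_image_cases)
    then show "\<zero>\<^bsub>M'\<^esub> \<oplus>\<^bsub>M'\<^esub> x' = x'" by (simp add: hom_zero[symmetric] hom_add[symmetric])
    have "\<phi> (\<ominus>\<^bsub>M\<^esub> x) \<oplus>\<^bsub>M'\<^esub> x' = \<zero>\<^bsub>M'\<^esub>" using x by (simp add: hom_add[symmetric] M.l_neg hom_zero)
    then show "\<exists>y\<in>carrier M'. y \<oplus>\<^bsub>M'\<^esub> x' = \<zero>\<^bsub>M'\<^esub>" using x hom_closed by blast
  qed
next
  fix a b x' assume "x' \<in> carrier M'"
  then obtain x where x: "x \<in> carrier M" "x' = \<phi> x" by (rule carrier_image_cases)
  then show "a \<odot>\<^bsub>M'\<^esub> x' \<in> carrier M'" by (simp add: hom_smult[symmetric] hom_closed)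
  show "(a \<oplus>\<^bsub>CR\<^esub> b) \<odot>\<^bsub>M'\<^esub> x' = a \<odot>\<^bsub>M'\<^esub> x' \<oplus>\<^bsub>M'\<^esub> b \<odot>\<^bsub>M'\<^esub> x'"
    using x by (simp add: hom_smult[symmetric] hom_add[symmetric] smult_add_distrib_CR[OF M.module_axioms])
  show "(a \<otimes>\<^bsub>CR\<^esub> b) \<odot>\<^bsub>M'\<^esub> x' = a \<odot>\<^bsub>M'\<^esub> (b \<odot>\<^bsub>M'\<^esub> x')"
    using x by (simp add: hom_smult[symmetric] smult_mult_CR[OF M.module_axioms])
  show "\<one>\<^bsub>CR\<^esub> \<odot>\<^bsub>M'\<^esub> x' = x'"
    using x by (simp add: hom_smult[symmetric] smult_one_CR[OF M.module_axioms])
next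
  fix a x' y' assume "x' \<in> carrier M'" "y' \<in> carrier M'"
  then obtain x y where "x \<in> carrier M" "y \<in> carrier M" "x' = \<phi> x" "y' = \<phi> y"
    by (metis carrier_image_cases)
  then show "a \<odot>\<^bsub>M'\<^esub> (x' \<oplus>\<^bsub>M'\<^esub> y') = a \<odot>\<^bsub>M'\<^esub> x' \<oplus>\<^bsub>M'\<^esub> a \<odot>\<^bsub>M'\<^esub> y'"
    by (simp add: hom_smult[symmetric] hom_add[symmetric] M.smult_r_distr)
qed

sublocale M': module CR M' by (rule module_image)

lemma assoc_lhs_image:
  assumes uvw: "u \<in> carrier M" "v \<in> carrier M" "w \<in> carrier M"
  shows "assoc_lhs M' Y' l (\<phi> u) (\<phi> v) (\<phi> w) a b = \<phi> (assoc_lhs M Y l u v w a b)"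
proof -
  let ?J = "{j::nat. Y v (int j - b - 1) w \<noteq> \<zero>\<^bsub>M\<^esub>}"
  have Y'_zero: "Y' (\<phi> u) k \<zero>\<^bsub>M'\<^esub> = \<zero>\<^bsub>M'\<^esub>" for k
    using hom_Y[OF uvw(1) M.zero_closed] nva_Y_zero_right[OF nva uvw(1)] by (simp add: hom_zero)
  have "\<phi> (assoc_lhs M Y l u v w a b) = (\<Oplus>\<^bsub>M'\<^esub>j\<in>?J. ((of_int (a + int j) :: complex) gchoose j) \<odot>\<^bsub>M'\<^esub>
          Y' (\<phi> u) (int l - 1 - int j - a) (Y' (\<phi> v) (int j - b - 1) (\<phi> w)))"
    unfolding assoc_lhs_def
    using nva_modes_finite[OF nva uvw(2,3)] uvw nva_Y_closed[OF nva]
    by (subst module_hom_finsum[OF M.module_axioms M'.module_axioms hom_add hom_zero hom_closed])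
       (auto intro!: M'.finsum_cong' simp: hom_smult hom_Y hom_closed)
  also have "\<dots> = assoc_lhs M' Y' l (\<phi> u) (\<phi> v) (\<phi> w) a b"
    unfolding assoc_lhs_def
  proof (rule M'.add.finprod_mono_neutral_cong_right)
    show "finite ?J" by (rule nva_modes_finite[OF nva uvw(2,3)])
    show "{j. Y' (\<phi> v) (int j - b - 1) (\<phi> w) \<noteq> \<zero>\<^bsub>M'\<^esub>} \<subseteq> ?J"
      using uvw by (auto simp: hom_Y[symmetric] hom_zero)
  qed (use uvw nva_Y_closed[OF nva] in
        \<open>auto simp: Y'_zero hom_Y[symmetric] hom_closed smult_zero_right_CR[OF M'.module_axioms]\<close>)
  finally show ?thesis by simp
qed

lemma assoc_rhs_image:
  assumes uvw: "u \<in> carrier M" "v \<in> carrier M" "w \<in> carrier M"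
  shows "assoc_rhs M' Y' l (\<phi> u) (\<phi> v) (\<phi> w) a b = \<phi> (assoc_rhs M Y l u v w a b)"
  unfolding assoc_rhs_def using uvw nva_Y_closed[OF nva]
  by (subst module_hom_finsum[OF M.module_axioms M'.module_axioms hom_add hom_zero hom_closed])
     (auto intro!: M'.finsum_cong' simp: hom_smult hom_Y hom_closed)

lemma nonlocal_va_image: "nonlocal_va M' (\<phi> vac) Y'"
proof -
  note Y_closed = nva_Y_closed[OF nva]
  have "\<exists>N. \<forall>n\<ge>N. Y' (\<phi> u) n (\<phi> v) = \<zero>\<^bsub>M'\<^esub>" if uv: "u \<in> carrier M" "v \<in> carrier M" for u v
  proof -
    obtain N where "\<forall>n\<ge>N. Y u n v = \<zero>\<^bsub>M\<^esub>" using nva_truncation[OF nva uv] by blast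
    then show ?thesis using uv by (intro exI[of _ N]) (simp add: hom_Y[symmetric] hom_zero)
  qed
  moreover have "\<exists>l. \<forall>a b. assoc_lhs M' Y' l (\<phi> u) (\<phi> v) (\<phi> w) a b = assoc_rhs M' Y' l (\<phi> u) (\<phi> v) (\<phi> w) a b"
    if "u \<in> carrier M" "v \<in> carrier M" "w \<in> carrier M" for u v w
    using nva_weak_assoc[OF nva that] by (simp add: assoc_lhs_image[OF that] assoc_rhs_image[OF that]) metis
  ultimately show ?thesis
    unfolding nonlocal_va_def surj[symmetric] ball_simps
    using nva M'.module_axioms[unfolded surj[symmetric]] nva_vacuum[OF nva]
    by (simp add: hom_Y[symmetric] hom_add[symmetric] hom_smult[symmetric] hom_zero[symmetric] Y_closed
        nva_Y_add_left nva_Y_smult_left nva_Y_add_right nva_Y_smult_right nva_vacuum_Y nva_creation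
        nva_creation_constant M.add.m_closed)
qed

end

lemma (in module) finsum_in_submodule:
  assumes "submodule H R M" "finite A" "\<And>i. i \<in> A \<Longrightarrow> f i \<in> H"
  shows "finsum M f A \<in> H"
  using assms(2,3)
proof (induct A rule: finite_induct)
  case empty
  then show ?case using assms(1) by (simp add: submodule_def subgroup_def)
next
  case (insert x A)
  then show ?case
    using submoduleE(1,5)[OF assms(1)] by (subst finsum_insert) (auto simp: Pi_def)
qed

lemma lin_span_superset: "S \<subseteq> lin_span M S"
  by (auto simp: lin_span_def)

lemma lin_span_least: "submodule H CR M \<Longrightarrow> S \<subseteq> H \<Longrightarrow> lin_span M S \<subseteq> H"
  by (auto simp: lin_span_def)

lemma word_val_in_assoc_filtration:
  assumes "set (map fst ws) \<subseteq> T"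
  shows "word_val Y vac ws \<in> assoc_filtration V vac Y T (- sum_list (map snd ws))"
  unfolding assoc_filtration_def
  by (rule subsetD[OF lin_span_superset], rule CollectI, rule exI[of _ ws]) (use assms in \<open>cases ws; simp\<close>)

lemma generators_in_assoc_filtration:
  assumes nva: "nonlocal_va V vac Y" and "T \<subseteq> carrier V"
  shows "T \<subseteq> assoc_filtration V vac Y T 1"
proof
  fix u assume u: "u \<in> T"
  have "word_val Y vac [(u, -1)] \<in> assoc_filtration V vac Y T (- sum_list (map snd [(u, -1)]))"
    by (rule word_val_in_assoc_filtration) (use u in simp)
  then show "u \<in> assoc_filtration V vac Y T 1"
    using nva_creation_constant[OF nva] u assms(2) by auto
qed

locale nva_filtration =
  fixes V :: "(complex,'v) module" and vac :: 'v and Y :: "'v vop" and F :: "int \<Rightarrow> 'v set"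
  assumes nva: "nonlocal_va V vac Y"
    and subsp: "\<And>n. submodule (F n) CR V"
    and incr: "\<And>n. F n \<subseteq> F (n + 1)"
    and vac_F0: "vac \<in> F 0"
    and compat: "\<And>a b k m n. a \<in> F k \<Longrightarrow> b \<in> F n \<Longrightarrow> Y a m b \<in> F (k + n - m - 1)"
begin

sublocale V: module CR V by (rule nonlocal_va_module[OF nva])

lemmas Y_closed = nva_Y_closed[OF nva]
lemmas Y_zero_right = nva_Y_zero_right[OF nva]
lemmas Y_zero_left = nva_Y_zero_left[OF nva]

lemma F_subset_carrier: "F n \<subseteq> carrier V" using V.submoduleE(1)[OF subsp] .
lemma F_zero: "\<zero>\<^bsub>V\<^esub> \<in> F n" using subsp[of n] by (simp add: submodule_def subgroup_def)
lemma F_add: "x \<in> F n \<Longrightarrow> y \<in> F n \<Longrightarrow> x \<oplus>\<^bsub>V\<^esub> y \<in> F n" using V.submoduleE(5)[OF subsp] by blast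
lemma F_smult: "x \<in> F n \<Longrightarrow> (c::complex) \<odot>\<^bsub>V\<^esub> x \<in> F n" using V.submoduleE(4)[OF subsp, of c] by simp
lemma F_neg: "x \<in> F n \<Longrightarrow> \<ominus>\<^bsub>V\<^esub> x \<in> F n" using V.submoduleE(3)[OF subsp] by blast
lemma F_carrier: "x \<in> F n \<Longrightarrow> x \<in> carrier V" using F_subset_carrier by blast

lemma F_mono: "i \<le> j \<Longrightarrow> F i \<subseteq> F j"
proof -
  assume "i \<le> j"
  have "F i \<subseteq> F (i + int d)" for d
    by (induct d) (simp, metis (no_types) incr of_nat_Suc add.assoc add.commute subset_trans)
  from this[of "nat (j - i)"] \<open>i \<le> j\<close> show ?thesis by simp
qed

lemma F_finsum: "finite A \<Longrightarrow> (\<And>i. i \<in> A \<Longrightarrow> f i \<in> F n) \<Longrightarrow> finsum V f A \<in> F n"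
  by (rule V.finsum_in_submodule[OF subsp])

lemmas Y_finsum_right = nva_Y_finsum_right[OF nva]
lemmas Y_finsum_left = nva_Y_finsum_left[OF nva]

subsection \<open>The Rees module\<close>

definition supp :: "(int \<Rightarrow> 'v) \<Rightarrow> int set" where "supp x = {n. x n \<noteq> \<zero>\<^bsub>V\<^esub>}"

definition rees :: "(int \<Rightarrow> 'v) set" where "rees = {x. (\<forall>n. x n \<in> F n) \<and> finite (supp x)}"

definition Rees :: "(complex, int \<Rightarrow> 'v) module" where
  "Rees = \<lparr>carrier = rees, mult = (\<lambda>_ _ _. \<zero>\<^bsub>V\<^esub>), one = (\<lambda>_. \<zero>\<^bsub>V\<^esub>), zero = (\<lambda>_. \<zero>\<^bsub>V\<^esub>),
        add = (\<lambda>x y n. x n \<oplus>\<^bsub>V\<^esub> y n), smult = (\<lambda>c x n. c \<odot>\<^bsub>V\<^esub> x n)\<rparr>"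

lemma Rees_simps[simp]: "carrier Rees = rees" "x \<oplus>\<^bsub>Rees\<^esub> y = (\<lambda>n. x n \<oplus>\<^bsub>V\<^esub> y n)"
  "c \<odot>\<^bsub>Rees\<^esub> x = (\<lambda>n. c \<odot>\<^bsub>V\<^esub> x n)" "\<zero>\<^bsub>Rees\<^esub> = (\<lambda>_. \<zero>\<^bsub>V\<^esub>)"
  by (simp_all add: Rees_def)

lemma rees_component: "x \<in> rees \<Longrightarrow> x n \<in> F n" by (simp add: rees_def)
lemma rees_component_carrier: "x \<in> rees \<Longrightarrow> x n \<in> carrier V" using rees_component F_carrier by blast
lemma rees_finite_supp: "x \<in> rees \<Longrightarrow> finite (supp x)" by (simp add: rees_def)
lemma reesI: "(\<And>n. x n \<in> F n) \<Longrightarrow> finite (supp x) \<Longrightarrow> x \<in> rees" by (simp add: rees_def)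
lemma supp_iff: "n \<notin> supp x \<longleftrightarrow> x n = \<zero>\<^bsub>V\<^esub>" by (simp add: supp_def)

lemma rees_add: "x \<in> rees \<Longrightarrow> y \<in> rees \<Longrightarrow> (\<lambda>n. x n \<oplus>\<^bsub>V\<^esub> y n) \<in> rees"
proof (rule reesI)
  assume xy: "x \<in> rees" "y \<in> rees"
  show "x n \<oplus>\<^bsub>V\<^esub> y n \<in> F n" for n using xy rees_component F_add by blast
  have "supp (\<lambda>n. x n \<oplus>\<^bsub>V\<^esub> y n) \<subseteq> supp x \<union> supp y" unfolding supp_def by auto
  thus "finite (supp (\<lambda>n. x n \<oplus>\<^bsub>V\<^esub> y n))" using xy rees_finite_supp finite_subset by blast
qed

lemma rees_smult: "x \<in> rees \<Longrightarrow> (\<lambda>n. (c::complex) \<odot>\<^bsub>V\<^esub> x n) \<in> rees"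
proof (rule reesI)
  assume x: "x \<in> rees"
  show "c \<odot>\<^bsub>V\<^esub> x n \<in> F n" for n using x rees_component F_smult by blast
  have "supp (\<lambda>n. c \<odot>\<^bsub>V\<^esub> x n) \<subseteq> supp x" unfolding supp_def using smult_zero_right_CR[OF V.module_axioms] by auto
  thus "finite (supp (\<lambda>n. c \<odot>\<^bsub>V\<^esub> x n))" using x rees_finite_supp finite_subset by blast
qed

lemma rees_neg: "x \<in> rees \<Longrightarrow> (\<lambda>n. \<ominus>\<^bsub>V\<^esub> x n) \<in> rees"
proof (rule reesI)
  assume x: "x \<in> rees"
  show "\<ominus>\<^bsub>V\<^esub> x n \<in> F n" for n using x rees_component F_neg by blast
  have "supp (\<lambda>n. \<ominus>\<^bsub>V\<^esub> x n) \<subseteq> supp x" unfolding supp_def by auto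
  thus "finite (supp (\<lambda>n. \<ominus>\<^bsub>V\<^esub> x n))" using x rees_finite_supp finite_subset by blast
qed

lemma rees_zero: "(\<lambda>_. \<zero>\<^bsub>V\<^esub>) \<in> rees"
  by (rule reesI) (simp_all add: F_zero supp_def)

lemma Rees_module: "module CR Rees"
proof (rule moduleI)
  show "cring CR" using V.is_cring .
  show "abelian_group Rees"
  proof (rule abelian_groupI)
    fix x y assume "x \<in> carrier Rees" "y \<in> carrier Rees"
    thus "x \<oplus>\<^bsub>Rees\<^esub> y \<in> carrier Rees" using rees_add by simp
    show "x \<oplus>\<^bsub>Rees\<^esub> y = y \<oplus>\<^bsub>Rees\<^esub> x" using \<open>x \<in> carrier Rees\<close> \<open>y \<in> carrier Rees\<close> rees_component_carrier
      by (auto simp: V.add.m_comm)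
  next
    show "\<zero>\<^bsub>Rees\<^esub> \<in> carrier Rees" using rees_zero by simp
  next
    fix x y z assume "x \<in> carrier Rees" "y \<in> carrier Rees" "z \<in> carrier Rees"
    thus "x \<oplus>\<^bsub>Rees\<^esub> y \<oplus>\<^bsub>Rees\<^esub> z = x \<oplus>\<^bsub>Rees\<^esub> (y \<oplus>\<^bsub>Rees\<^esub> z)" using rees_component_carrier
      by (auto simp: V.add.m_assoc)
  next
    fix x assume x: "x \<in> carrier Rees"
    thus "\<zero>\<^bsub>Rees\<^esub> \<oplus>\<^bsub>Rees\<^esub> x = x" using rees_component_carrier by auto
    have "(\<lambda>n. \<ominus>\<^bsub>V\<^esub> x n) \<oplus>\<^bsub>Rees\<^esub> x = \<zero>\<^bsub>Rees\<^esub>" using x rees_component_carrier by (auto simp: V.l_neg)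
    thus "\<exists>y\<in>carrier Rees. y \<oplus>\<^bsub>Rees\<^esub> x = \<zero>\<^bsub>Rees\<^esub>" using rees_neg x by auto
  qed
next
  fix a x assume "x \<in> carrier Rees"
  thus "a \<odot>\<^bsub>Rees\<^esub> x \<in> carrier Rees" using rees_smult by simp
next
  fix a b x assume x: "x \<in> carrier Rees"
  thus "(a \<oplus>\<^bsub>CR\<^esub> b) \<odot>\<^bsub>Rees\<^esub> x = a \<odot>\<^bsub>Rees\<^esub> x \<oplus>\<^bsub>Rees\<^esub> b \<odot>\<^bsub>Rees\<^esub> x"
    using rees_component_carrier by (auto simp: smult_add_distrib_CR[OF V.module_axioms])
  show "(a \<otimes>\<^bsub>CR\<^esub> b) \<odot>\<^bsub>Rees\<^esub> x = a \<odot>\<^bsub>Rees\<^esub> (b \<odot>\<^bsub>Rees\<^esub> x)"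
    using x rees_component_carrier by (auto simp: smult_mult_CR[OF V.module_axioms])
  show "\<one>\<^bsub>CR\<^esub> \<odot>\<^bsub>Rees\<^esub> x = x" using x rees_component_carrier by (auto simp: smult_one_CR[OF V.module_axioms])
next
  fix a x y assume "x \<in> carrier Rees" "y \<in> carrier Rees"
  thus "a \<odot>\<^bsub>Rees\<^esub> (x \<oplus>\<^bsub>Rees\<^esub> y) = a \<odot>\<^bsub>Rees\<^esub> x \<oplus>\<^bsub>Rees\<^esub> a \<odot>\<^bsub>Rees\<^esub> y"
    using rees_component_carrier by (auto simp: V.smult_r_distr)
qed

sublocale rees: module CR Rees by (rule Rees_module)

lemma Rees_finsum:
  assumes "finite A" "\<And>i. i \<in> A \<Longrightarrow> f i \<in> rees"
  shows "finsum Rees f A = (\<lambda>D. \<Oplus>\<^bsub>V\<^esub>i\<in>A. f i D)"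
proof
  fix D
  show "finsum Rees f A D = (\<Oplus>\<^bsub>V\<^esub>i\<in>A. f i D)"
    by (rule module_hom_finsum[where \<phi> = "\<lambda>x. x D", OF Rees_module V.module_axioms])
       (use assms rees_component_carrier in auto)
qed

definition reesY :: "(int \<Rightarrow> 'v) vop" where
  "reesY x k y = (\<lambda>D. finsum V (\<lambda>m. Y (x m) k (y (D - m + k + 1))) (supp x))"

lemma reesY_superset:
  assumes x: "x \<in> rees" and y: "y \<in> rees" and A: "finite A" "supp x \<subseteq> A"
  shows "reesY x k y D = finsum V (\<lambda>m. Y (x m) k (y (D - m + k + 1))) A"
  unfolding reesY_def
proof (rule V.add.finprod_mono_neutral_cong_left[OF A])
  show "(\<lambda>m. Y (x m) k (y (D - m + k + 1))) \<in> A \<rightarrow> carrier V"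
    using x y rees_component_carrier Y_closed by (simp add: Pi_def)
  fix i assume "i \<in> A - supp x"
  hence "x i = \<zero>\<^bsub>V\<^esub>" by (simp add: supp_iff)
  thus "Y (x i) k (y (D - i + k + 1)) = \<zero>\<^bsub>V\<^esub>" using Y_zero_left y rees_component_carrier by simp
qed simp

lemma reesY_component:
  assumes x: "x \<in> rees" and y: "y \<in> rees"
  shows "reesY x k y D \<in> F D"
  unfolding reesY_def
proof (rule F_finsum)
  show "finite (supp x)" using rees_finite_supp[OF x] .
  fix m assume "m \<in> supp x"
  have "Y (x m) k (y (D - m + k + 1)) \<in> F (m + (D - m + k + 1) - k - 1)"
    using compat rees_component x y by blast
  thus "Y (x m) k (y (D - m + k + 1)) \<in> F D" by simp
qed

lemma supp_reesY:
  assumes x: "x \<in> rees" and y: "y \<in> rees"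
  shows "supp (reesY x k y) \<subseteq> (\<lambda>(m,n). m + n - k - 1) ` (supp x \<times> supp y)"
proof
  fix D assume D: "D \<in> supp (reesY x k y)"
  show "D \<in> (\<lambda>(m,n). m + n - k - 1) ` (supp x \<times> supp y)"
  proof (rule ccontr)
    assume nD: "D \<notin> (\<lambda>(m,n). m + n - k - 1) ` (supp x \<times> supp y)"
    have "reesY x k y D = \<zero>\<^bsub>V\<^esub>" unfolding reesY_def
    proof (rule V.add.finprod_one_eqI)
      fix m assume m: "m \<in> supp x"
      have "D - m + k + 1 \<notin> supp y"
      proof
        assume "D - m + k + 1 \<in> supp y"
        hence "(m, D - m + k + 1) \<in> supp x \<times> supp y" using m by simp
        hence "m + (D - m + k + 1) - k - 1 \<in> (\<lambda>(m,n). m + n - k - 1) ` (supp x \<times> supp y)" by force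
        thus False using nD by simp
      qed
      thus "Y (x m) k (y (D - m + k + 1)) = \<zero>\<^bsub>V\<^esub>" using Y_zero_right x rees_component_carrier by (simp add: supp_iff)
    qed
    thus False using D by (simp add: supp_def)
  qed
qed

lemma reesY_closed: "x \<in> rees \<Longrightarrow> y \<in> rees \<Longrightarrow> reesY x k y \<in> rees"
proof (rule reesI)
  assume xy: "x \<in> rees" "y \<in> rees"
  show "reesY x k y n \<in> F n" for n using reesY_component[OF xy] .
  have "finite ((\<lambda>(m,n). m + n - k - 1) ` (supp x \<times> supp y))"
    using rees_finite_supp xy by (intro finite_imageI finite_cartesian_product) auto
  thus "finite (supp (reesY x k y))" using supp_reesY[OF xy] finite_subset by blast
qed

lemma reesY_carrier: "x \<in> rees \<Longrightarrow> y \<in> rees \<Longrightarrow> reesY x k y D \<in> carrier V"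
  using reesY_closed rees_component_carrier by blast

lemma reesY_add_left:
  assumes x: "x \<in> rees" and x': "x' \<in> rees" and y: "y \<in> rees"
  shows "reesY (\<lambda>n. x n \<oplus>\<^bsub>V\<^esub> x' n) k y = (\<lambda>D. reesY x k y D \<oplus>\<^bsub>V\<^esub> reesY x' k y D)"
proof
  fix D
  let ?A = "supp x \<union> supp x'"
  have fA: "finite ?A" using rees_finite_supp x x' by simp
  have s: "supp (\<lambda>n. x n \<oplus>\<^bsub>V\<^esub> x' n) \<subseteq> ?A" unfolding supp_def by auto
  have "reesY (\<lambda>n. x n \<oplus>\<^bsub>V\<^esub> x' n) k y D = finsum V (\<lambda>m. Y (x m \<oplus>\<^bsub>V\<^esub> x' m) k (y (D - m + k + 1))) ?A"
    using reesY_superset[OF rees_add[OF x x'] y fA s] .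
  also have "\<dots> = finsum V (\<lambda>m. Y (x m) k (y (D - m + k + 1)) \<oplus>\<^bsub>V\<^esub> Y (x' m) k (y (D - m + k + 1))) ?A"
    using x x' y rees_component_carrier Y_closed by (intro V.finsum_cong') (auto simp: nva_Y_add_left[OF nva] Pi_def)
  also have "\<dots> = reesY x k y D \<oplus>\<^bsub>V\<^esub> reesY x' k y D"
    using x x' y rees_component_carrier Y_closed reesY_superset[OF x y fA] reesY_superset[OF x' y fA] by (simp add: V.finsum_addf Pi_def)
  finally show "reesY (\<lambda>n. x n \<oplus>\<^bsub>V\<^esub> x' n) k y D = reesY x k y D \<oplus>\<^bsub>V\<^esub> reesY x' k y D" .
qed

lemma reesY_smult_left:
  assumes x: "x \<in> rees" and y: "y \<in> rees"
  shows "reesY (\<lambda>n. c \<odot>\<^bsub>V\<^esub> x n) k y = (\<lambda>D. c \<odot>\<^bsub>V\<^esub> reesY x k y D)"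
proof
  fix D
  have fA: "finite (supp x)" using rees_finite_supp x by simp
  have s: "supp (\<lambda>n. c \<odot>\<^bsub>V\<^esub> x n) \<subseteq> supp x" unfolding supp_def using smult_zero_right_CR[OF V.module_axioms] by auto
  have "reesY (\<lambda>n. c \<odot>\<^bsub>V\<^esub> x n) k y D = finsum V (\<lambda>m. Y (c \<odot>\<^bsub>V\<^esub> x m) k (y (D - m + k + 1))) (supp x)"
    using reesY_superset[OF rees_smult[OF x] y fA s] .
  also have "\<dots> = finsum V (\<lambda>m. c \<odot>\<^bsub>V\<^esub> Y (x m) k (y (D - m + k + 1))) (supp x)"
    using x y rees_component_carrier Y_closed by (intro V.finsum_cong') (auto simp: nva_Y_smult_left[OF nva] Pi_def)
  also have "\<dots> = c \<odot>\<^bsub>V\<^esub> reesY x k y D"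
    unfolding reesY_def using x y rees_component_carrier Y_closed fA by (subst V.finsum_smult_ldistr) (auto simp: Pi_def)
  finally show "reesY (\<lambda>n. c \<odot>\<^bsub>V\<^esub> x n) k y D = c \<odot>\<^bsub>V\<^esub> reesY x k y D" .
qed

lemma reesY_add_right:
  assumes x: "x \<in> rees" and y: "y \<in> rees" and y': "y' \<in> rees"
  shows "reesY x k (\<lambda>n. y n \<oplus>\<^bsub>V\<^esub> y' n) = (\<lambda>D. reesY x k y D \<oplus>\<^bsub>V\<^esub> reesY x k y' D)"
proof
  fix D
  have "reesY x k (\<lambda>n. y n \<oplus>\<^bsub>V\<^esub> y' n) D = finsum V (\<lambda>m. Y (x m) k (y (D - m + k + 1)) \<oplus>\<^bsub>V\<^esub> Y (x m) k (y' (D - m + k + 1))) (supp x)"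
    unfolding reesY_def using x y y' rees_component_carrier Y_closed by (intro V.finsum_cong') (auto simp: nva_Y_add_right[OF nva] Pi_def)
  also have "\<dots> = reesY x k y D \<oplus>\<^bsub>V\<^esub> reesY x k y' D"
    unfolding reesY_def using x y y' rees_component_carrier Y_closed by (simp add: V.finsum_addf Pi_def)
  finally show "reesY x k (\<lambda>n. y n \<oplus>\<^bsub>V\<^esub> y' n) D = reesY x k y D \<oplus>\<^bsub>V\<^esub> reesY x k y' D" .
qed

lemma reesY_smult_right:
  assumes x: "x \<in> rees" and y: "y \<in> rees"
  shows "reesY x k (\<lambda>n. c \<odot>\<^bsub>V\<^esub> y n) = (\<lambda>D. c \<odot>\<^bsub>V\<^esub> reesY x k y D)"
proof
  fix D
  have fA: "finite (supp x)" using rees_finite_supp x by simp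
  have "reesY x k (\<lambda>n. c \<odot>\<^bsub>V\<^esub> y n) D = finsum V (\<lambda>m. c \<odot>\<^bsub>V\<^esub> Y (x m) k (y (D - m + k + 1))) (supp x)"
    unfolding reesY_def using x y rees_component_carrier Y_closed by (intro V.finsum_cong') (auto simp: nva_Y_smult_right[OF nva] Pi_def)
  also have "\<dots> = c \<odot>\<^bsub>V\<^esub> reesY x k y D"
    unfolding reesY_def using x y rees_component_carrier Y_closed fA by (subst V.finsum_smult_ldistr) (auto simp: Pi_def)
  finally show "reesY x k (\<lambda>n. c \<odot>\<^bsub>V\<^esub> y n) D = c \<odot>\<^bsub>V\<^esub> reesY x k y D" .
qed

lemma reesY_truncation:
  assumes x: "x \<in> rees" and y: "y \<in> rees"
  shows "\<exists>N. \<forall>k\<ge>N. reesY x k y = (\<lambda>_. \<zero>\<^bsub>V\<^esub>)"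
proof -
  have fin: "finite (supp x \<times> supp y)" using rees_finite_supp x y by simp
  obtain N where N: "\<forall>s\<in>supp x \<times> supp y. \<forall>k\<ge>N. Y (x (fst s)) k (y (snd s)) = \<zero>\<^bsub>V\<^esub>"
    using finite_uniform_threshold[OF fin, of "\<lambda>s k. Y (x (fst s)) k (y (snd s)) = \<zero>\<^bsub>V\<^esub>"]
      nva_truncation[OF nva] x y rees_component_carrier by blast
  show ?thesis
  proof (intro exI allI impI ext)
    fix k D assume k: "N \<le> k"
    show "reesY x k y D = \<zero>\<^bsub>V\<^esub>" unfolding reesY_def
    proof (rule V.add.finprod_one_eqI)
      fix m assume m: "m \<in> supp x"
      show "Y (x m) k (y (D - m + k + 1)) = \<zero>\<^bsub>V\<^esub>"
      proof (cases "D - m + k + 1 \<in> supp y")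
        case True thus ?thesis using N m k by force
      next
        case False thus ?thesis using Y_zero_right x rees_component_carrier by (simp add: supp_iff)
      qed
    qed
  qed
qed

definition single :: "int \<Rightarrow> 'v \<Rightarrow> int \<Rightarrow> 'v" where "single n a = (\<lambda>m. if m = n then a else \<zero>\<^bsub>V\<^esub>)"

lemma single_rees: "a \<in> F n \<Longrightarrow> single n a \<in> rees"
proof (rule reesI)
  assume a: "a \<in> F n"
  show "single n a m \<in> F m" for m using a F_zero by (simp add: single_def)
  have "supp (single n a) \<subseteq> {n}" by (auto simp: supp_def single_def)
  thus "finite (supp (single n a))" using finite_subset by blast
qed

lemma supp_single: "supp (single n a) \<subseteq> {n}" by (auto simp: supp_def single_def)

lemma reesY_single_left:
  assumes a: "a \<in> F n" and y: "y \<in> rees"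
  shows "reesY (single n a) k y D = Y a k (y (D - n + k + 1))"
  using reesY_superset[OF single_rees[OF a] y _ supp_single] a y F_carrier rees_component_carrier Y_closed by (simp add: single_def)

lemma reesY_vacuum: "y \<in> rees \<Longrightarrow> reesY (single 0 vac) k y = (if k = -1 then y else (\<lambda>_. \<zero>\<^bsub>V\<^esub>))"
  using reesY_single_left[OF vac_F0] nva_vacuum_Y[OF nva] rees_component_carrier by (auto intro!: ext)

lemma reesY_creation:
  assumes x: "x \<in> rees"
  shows "k \<ge> 0 \<Longrightarrow> reesY x k (single 0 vac) = (\<lambda>_. \<zero>\<^bsub>V\<^esub>)" and "reesY x (-1) (single 0 vac) = x"
proof -
  assume k: "k \<ge> 0"
  show "reesY x k (single 0 vac) = (\<lambda>_. \<zero>\<^bsub>V\<^esub>)" unfolding reesY_def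
    by (intro ext V.add.finprod_one_eqI)
       (use x k rees_component_carrier nva_creation[OF nva] Y_zero_right in \<open>auto simp: single_def\<close>)
next
  show "reesY x (-1) (single 0 vac) = x"
  proof
    fix D
    have "reesY x (-1) (single 0 vac) D = finsum V (\<lambda>m. Y (x m) (-1) (single 0 vac (D - m + -1 + 1))) (insert D (supp x))"
      using rees_finite_supp[OF x] by (intro reesY_superset[OF x single_rees[OF vac_F0]]) auto
    also have "\<dots> = finsum V (\<lambda>m. if D = m then x m else \<zero>\<^bsub>V\<^esub>) (insert D (supp x))"
    proof (rule V.finsum_cong')
      fix m
      show "Y (x m) (-1) (single 0 vac (D - m + -1 + 1)) = (if D = m then x m else \<zero>\<^bsub>V\<^esub>)"
        using nva_creation_constant[OF nva] Y_zero_right x rees_component_carrier by (simp add: single_def)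
    qed (use x rees_component_carrier in \<open>auto simp: Pi_def\<close>)
    also have "\<dots> = x D"
      using V.finsum_singleton[of D "insert D (supp x)" x] rees_finite_supp[OF x] x rees_component_carrier by (simp add: Pi_def)
    finally show "reesY x (-1) (single 0 vac) D = x D" .
  qed
qed

lemma reesY_lower_left:
  assumes z: "z \<in> rees" "\<And>n. z n \<in> F (n - 1)" and y: "y \<in> rees"
  shows "reesY z k y D \<in> F (D - 1)"
  unfolding reesY_def
proof (rule F_finsum)
  show "finite (supp z)" using rees_finite_supp[OF z(1)] .
  fix m assume "m \<in> supp z"
  have "Y (z m) k (y (D - m + k + 1)) \<in> F (m - 1 + (D - m + k + 1) - k - 1)"
    using compat z(2) rees_component y by blast
  thus "Y (z m) k (y (D - m + k + 1)) \<in> F (D - 1)" by simp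
qed

lemma reesY_lower_right:
  assumes x: "x \<in> rees" and z: "z \<in> rees" "\<And>n. z n \<in> F (n - 1)"
  shows "reesY x k z D \<in> F (D - 1)"
  unfolding reesY_def
proof (rule F_finsum)
  show "finite (supp x)" using rees_finite_supp[OF x] .
  fix m assume "m \<in> supp x"
  have "Y (x m) k (z (D - m + k + 1)) \<in> F (m + (D - m + k + 1 - 1) - k - 1)"
    using compat z(2) rees_component x by blast
  thus "Y (x m) k (z (D - m + k + 1)) \<in> F (D - 1)" by simp
qed

lemma reesY_zero_right: "x \<in> rees \<Longrightarrow> reesY x k (\<lambda>_. \<zero>\<^bsub>V\<^esub>) = (\<lambda>_. \<zero>\<^bsub>V\<^esub>)"
  unfolding reesY_def by (intro ext V.add.finprod_one_eqI) (use Y_zero_right rees_component_carrier in auto)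

lemma assoc_lhs_closed: "u \<in> carrier V \<Longrightarrow> v \<in> carrier V \<Longrightarrow> w \<in> carrier V \<Longrightarrow> assoc_lhs V Y l u v w a b \<in> carrier V"
  unfolding assoc_lhs_def by (intro V.finsum_closed) (auto simp: Pi_def Y_closed)

lemma assoc_rhs_closed: "u \<in> carrier V \<Longrightarrow> v \<in> carrier V \<Longrightarrow> w \<in> carrier V \<Longrightarrow> assoc_rhs V Y l u v w a b \<in> carrier V"
  unfolding assoc_rhs_def by (intro V.finsum_closed) (auto simp: Pi_def Y_closed)

lemma reesY_modes_vanish:
  assumes v: "v \<in> rees" and w: "w \<in> rees"
  obtains N where "\<And>n p j. n \<in> supp v \<Longrightarrow> N \<le> j \<Longrightarrow> Y (v n) (int j - b - 1) (w p) = \<zero>\<^bsub>V\<^esub>"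
proof -
  have fin: "finite (supp v \<times> supp w)" using rees_finite_supp v w by simp
  obtain T where T: "\<forall>s\<in>supp v \<times> supp w. \<forall>k\<ge>T. Y (v (fst s)) k (w (snd s)) = \<zero>\<^bsub>V\<^esub>"
    using finite_uniform_threshold[OF fin, of "\<lambda>s k. Y (v (fst s)) k (w (snd s)) = \<zero>\<^bsub>V\<^esub>"]
      nva_truncation[OF nva] v w rees_component_carrier by blast
  show thesis
  proof (rule that[of "nat (T + b + 1)"])
    fix n p j assume n: "n \<in> supp v" and j: "nat (T + b + 1) \<le> j"
    show "Y (v n) (int j - b - 1) (w p) = \<zero>\<^bsub>V\<^esub>"
    proof (cases "p \<in> supp w")
      case True
      have "int j - b - 1 \<ge> T" using j by linarith
      with T True n show ?thesis by force
    next
      case False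
      then show ?thesis using Y_zero_right v rees_component_carrier by (simp add: supp_iff)
    qed
  qed
qed

lemma reesY_nested_right:
  assumes u: "u \<in> rees" and v: "v \<in> rees" and w: "w \<in> rees"
  shows "reesY u k1 (reesY v k2 w) D =
    (\<Oplus>\<^bsub>V\<^esub>m\<in>supp u. \<Oplus>\<^bsub>V\<^esub>n\<in>supp v. Y (u m) k1 (Y (v n) k2 (w (D - m - n + k1 + k2 + 2))))"
  unfolding reesY_def[of u]
proof (rule V.finsum_cong')
  fix m assume "m \<in> supp u"
  have "reesY v k2 w (D - m + k1 + 1) = (\<Oplus>\<^bsub>V\<^esub>n\<in>supp v. Y (v n) k2 (w (D - m - n + k1 + k2 + 2)))"
    unfolding reesY_def
    by (intro V.finsum_cong') (use v w rees_component_carrier Y_closed in \<open>auto simp: Pi_def algebra_simps\<close>)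
  then show "Y (u m) k1 (reesY v k2 w (D - m + k1 + 1)) =
      (\<Oplus>\<^bsub>V\<^esub>n\<in>supp v. Y (u m) k1 (Y (v n) k2 (w (D - m - n + k1 + k2 + 2))))"
    using Y_finsum_right[OF rees_finite_supp[OF v]] u v w rees_component_carrier Y_closed by simp
qed (use u v w rees_component_carrier Y_closed in \<open>auto intro!: V.finsum_closed simp: Pi_def\<close>)

lemma Rees_assoc_lhs_component:
  assumes u: "u \<in> rees" and v: "v \<in> rees" and w: "w \<in> rees"
  shows "assoc_lhs Rees reesY L u v w a b D =
    (\<Oplus>\<^bsub>V\<^esub>m\<in>supp u. \<Oplus>\<^bsub>V\<^esub>n\<in>supp v. assoc_lhs V Y L (u m) (v n) (w (D - m - n + int L - a - b)) a b)"
proof -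
  let ?Su = "supp u" and ?Sv = "supp v"
  have fin: "finite ?Su" "finite ?Sv" using rees_finite_supp u v by auto
  define c where "c j = (of_int (a + int j) :: complex) gchoose j" for j :: nat
  define P where "P m n = D - m - n + int L - a - b" for m n
  define t where "t j m n = c j \<odot>\<^bsub>V\<^esub> Y (u m) (int L - 1 - int j - a) (Y (v n) (int j - b - 1) (w (P m n)))"
    for j m n
  have t_closed: "t j m n \<in> carrier V" for j m n unfolding t_def using u v w rees_component_carrier Y_closed by simp
  obtain N where N: "\<And>n p j. n \<in> ?Sv \<Longrightarrow> N \<le> j \<Longrightarrow> Y (v n) (int j - b - 1) (w p) = \<zero>\<^bsub>V\<^esub>"
    using reesY_modes_vanish[OF v w] by blast
  have "{j. reesY v (int j - b - 1) w \<noteq> \<zero>\<^bsub>Rees\<^esub>} \<subseteq> {..<N}"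
    using N unfolding reesY_def by (auto intro!: ext V.add.finprod_one_eqI simp: not_less[symmetric])
  then have "assoc_lhs Rees reesY L u v w a b =
      (\<Oplus>\<^bsub>Rees\<^esub>j\<in>{..<N}. c j \<odot>\<^bsub>Rees\<^esub> reesY u (int L - 1 - int j - a) (reesY v (int j - b - 1) w))"
    unfolding c_def using u v w reesY_closed reesY_zero_right
    by (intro assoc_lhs_eq_finsum[OF Rees_module]) auto
  then have "assoc_lhs Rees reesY L u v w a b D =
      (\<Oplus>\<^bsub>V\<^esub>j\<in>{..<N}. c j \<odot>\<^bsub>V\<^esub> reesY u (int L - 1 - int j - a) (reesY v (int j - b - 1) w) D)"
    using u v w reesY_closed rees_smult by (simp add: Rees_finsum)
  also have "\<dots> = (\<Oplus>\<^bsub>V\<^esub>j\<in>{..<N}. \<Oplus>\<^bsub>V\<^esub>m\<in>?Su. \<Oplus>\<^bsub>V\<^esub>n\<in>?Sv. t j m n)"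
    unfolding reesY_nested_right[OF u v w] t_def P_def
    using fin u v w rees_component_carrier Y_closed
    by (intro V.finsum_cong') (auto simp: V.finsum_smult_ldistr V.finsum_closed Pi_def algebra_simps)
  also have "\<dots> = (\<Oplus>\<^bsub>V\<^esub>m\<in>?Su. \<Oplus>\<^bsub>V\<^esub>n\<in>?Sv. \<Oplus>\<^bsub>V\<^esub>j\<in>{..<N}. t j m n)"
    using fin t_closed
    by (subst V.finsum_swap) (auto intro!: V.finsum_cong' V.finsum_swap V.finsum_closed simp: Pi_def)
  also have "\<dots> = (\<Oplus>\<^bsub>V\<^esub>m\<in>?Su. \<Oplus>\<^bsub>V\<^esub>n\<in>?Sv. assoc_lhs V Y L (u m) (v n) (w (P m n)) a b)"
  proof (intro V.finsum_cong' refl)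
    fix m n assume "n \<in> ?Sv"
    then have "{j. Y (v n) (int j - b - 1) (w (P m n)) \<noteq> \<zero>\<^bsub>V\<^esub>} \<subseteq> {..<N}"
      using N by (auto simp: not_less[symmetric])
    then show "(\<Oplus>\<^bsub>V\<^esub>j\<in>{..<N}. t j m n) = assoc_lhs V Y L (u m) (v n) (w (P m n)) a b"
      unfolding t_def c_def using u v w rees_component_carrier Y_zero_right Y_closed
      by (intro assoc_lhs_eq_finsum[OF V.module_axioms, symmetric]) auto
  qed (use u v w rees_component_carrier assoc_lhs_closed in \<open>auto intro!: V.finsum_closed simp: Pi_def\<close>)
  finally show ?thesis unfolding P_def .
qed

lemma reesY_nested_left:
  assumes u: "u \<in> rees" and v: "v \<in> rees" and w: "w \<in> rees"
  shows "reesY (reesY u k1 v) k2 w D =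
    finsum V (\<lambda>m. finsum V (\<lambda>n. Y (Y (u m) k1 (v n)) k2 (w (D - m - n + k1 + k2 + 2))) (supp v)) (supp u)"
proof -
  let ?Su = "supp u" and ?Sv = "supp v"
  have fSu: "finite ?Su" and fSv: "finite ?Sv" using rees_finite_supp u v by auto
  define E where "E = (\<lambda>(m,n). m + n - k1 - 1) ` (?Su \<times> ?Sv)"
  have fE: "finite E" unfolding E_def using fSu fSv by simp
  have sE: "supp (reesY u k1 v) \<subseteq> E" unfolding E_def by (rule supp_reesY[OF u v])
  define h where "h = (\<lambda>m e. Y (Y (u m) k1 (v (e - m + k1 + 1))) k2 (w (D - e + k2 + 1)))"
  have hc: "h m e \<in> carrier V" for m e unfolding h_def using u v w rees_component_carrier Y_closed by simp
  have "reesY (reesY u k1 v) k2 w D = finsum V (\<lambda>e. Y (reesY u k1 v e) k2 (w (D - e + k2 + 1))) E"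
    by (rule reesY_superset[OF reesY_closed[OF u v] w fE sE])
  also have "\<dots> = finsum V (\<lambda>e. finsum V (\<lambda>m. h m e) ?Su) E"
  proof (rule V.finsum_cong')
    fix e
    show "Y (reesY u k1 v e) k2 (w (D - e + k2 + 1)) = finsum V (\<lambda>m. h m e) ?Su"
      unfolding reesY_def h_def using Y_finsum_left[OF fSu] u v w rees_component_carrier Y_closed by simp
  qed (use hc fSu in \<open>auto intro!: V.finsum_closed simp: Pi_def\<close>)
  also have "\<dots> = finsum V (\<lambda>m. finsum V (\<lambda>e. h m e) E) ?Su"
    by (rule V.finsum_swap) (use fSu fE hc in auto)
  also have "\<dots> = finsum V (\<lambda>m. finsum V (\<lambda>n. Y (Y (u m) k1 (v n)) k2 (w (D - m - n + k1 + k2 + 2))) ?Sv) ?Su"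
  proof (rule V.finsum_cong')
    fix m assume m: "m \<in> ?Su"
    have "(\<Oplus>\<^bsub>V\<^esub>e\<in>E. h m e) = (\<Oplus>\<^bsub>V\<^esub>n\<in>?Sv. h m (n + (m - k1 - 1)))"
    proof (rule V.finsum_shift_reindex[OF fE])
      show "(\<lambda>n. n + (m - k1 - 1)) ` ?Sv \<subseteq> E"
      proof
        fix e assume "e \<in> (\<lambda>n. n + (m - k1 - 1)) ` ?Sv"
        then obtain n where "n \<in> ?Sv" "e = n + (m - k1 - 1)" by blast
        then show "e \<in> E" unfolding E_def using m by (auto intro!: image_eqI[of _ _ "(m, n)"])
      qed
      fix e assume "e - (m - k1 - 1) \<notin> ?Sv"
      then have "v (e - m + k1 + 1) = \<zero>\<^bsub>V\<^esub>" by (simp add: supp_iff algebra_simps)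
      then show "h m e = \<zero>\<^bsub>V\<^esub>" unfolding h_def using Y_zero_right Y_zero_left u w rees_component_carrier by simp
    qed (use hc in auto)
    also have "\<dots> = (\<Oplus>\<^bsub>V\<^esub>n\<in>?Sv. Y (Y (u m) k1 (v n)) k2 (w (D - m - n + k1 + k2 + 2)))"
      unfolding h_def
      by (intro V.finsum_cong') (use u v w rees_component_carrier Y_closed in \<open>auto simp: Pi_def algebra_simps\<close>)
    finally show "(\<Oplus>\<^bsub>V\<^esub>e\<in>E. h m e) = (\<Oplus>\<^bsub>V\<^esub>n\<in>?Sv. Y (Y (u m) k1 (v n)) k2 (w (D - m - n + k1 + k2 + 2)))" .
  qed (use fSv u v w rees_component_carrier Y_closed in \<open>auto intro!: V.finsum_closed simp: Pi_def\<close>)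
  finally show ?thesis .
qed

lemma Rees_assoc_rhs_component:
  assumes u: "u \<in> rees" and v: "v \<in> rees" and w: "w \<in> rees"
  shows "assoc_rhs Rees reesY L u v w a b D =
    (\<Oplus>\<^bsub>V\<^esub>m\<in>supp u. \<Oplus>\<^bsub>V\<^esub>n\<in>supp v. assoc_rhs V Y L (u m) (v n) (w (D - m - n + int L - a - b)) a b)"
proof -
  let ?Su = "supp u" and ?Sv = "supp v"
  have fin: "finite ?Su" "finite ?Sv" using rees_finite_supp u v by auto
  define P where "P m n = D - m - n + int L - a - b" for m n
  define t where "t i m n = (of_nat (L choose i) :: complex) \<odot>\<^bsub>V\<^esub>
    Y (Y (u m) (int L - int i - 1 - a) (v n)) (int i - b - 1) (w (P m n))" for i m n
  have t_closed: "t i m n \<in> carrier V" for i m n unfolding t_def using u v w rees_component_carrier Y_closed by simp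
  have "assoc_rhs Rees reesY L u v w a b D = (\<Oplus>\<^bsub>V\<^esub>i\<in>{0..L}. (of_nat (L choose i) :: complex) \<odot>\<^bsub>V\<^esub>
      reesY (reesY u (int L - int i - 1 - a) v) (int i - b - 1) w D)"
    unfolding assoc_rhs_def using u v w reesY_closed rees_smult by (simp add: Rees_finsum)
  also have "\<dots> = (\<Oplus>\<^bsub>V\<^esub>i\<in>{0..L}. \<Oplus>\<^bsub>V\<^esub>m\<in>?Su. \<Oplus>\<^bsub>V\<^esub>n\<in>?Sv. t i m n)"
    unfolding reesY_nested_left[OF u v w] t_def P_def
    using fin u v w rees_component_carrier Y_closed
    by (intro V.finsum_cong') (auto simp: V.finsum_smult_ldistr V.finsum_closed Pi_def algebra_simps)
  also have "\<dots> = (\<Oplus>\<^bsub>V\<^esub>m\<in>?Su. \<Oplus>\<^bsub>V\<^esub>n\<in>?Sv. \<Oplus>\<^bsub>V\<^esub>i\<in>{0..L}. t i m n)"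
    using fin t_closed
    by (subst V.finsum_swap) (auto intro!: V.finsum_cong' V.finsum_swap V.finsum_closed simp: Pi_def)
  finally show ?thesis unfolding t_def P_def assoc_rhs_def .
qed

lemma Rees_assoc:
  assumes u: "u \<in> rees" and v: "v \<in> rees" and w: "w \<in> rees"
    and assoc_V: "\<And>m n p. m \<in> supp u \<Longrightarrow> n \<in> supp v \<Longrightarrow>
      assoc_lhs V Y L (u m) (v n) (w p) a b = assoc_rhs V Y L (u m) (v n) (w p) a b"
  shows "assoc_lhs Rees reesY L u v w a b = assoc_rhs Rees reesY L u v w a b"
proof
  fix D
  show "assoc_lhs Rees reesY L u v w a b D = assoc_rhs Rees reesY L u v w a b D"
    unfolding Rees_assoc_lhs_component[OF u v w] Rees_assoc_rhs_component[OF u v w]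
    using assoc_V u v w rees_component_carrier assoc_lhs_closed assoc_rhs_closed
    by (intro V.finsum_cong' refl) (auto intro!: V.finsum_closed simp: Pi_def)
qed

lemma Rees_weak_assoc:
  assumes u: "u \<in> rees" and v: "v \<in> rees" and w: "w \<in> rees"
  shows "\<exists>L. \<forall>a b. assoc_lhs Rees reesY L u v w a b = assoc_rhs Rees reesY L u v w a b"
proof -
  let ?S = "supp u \<times> supp v \<times> supp w"
  have "finite ?S" using rees_finite_supp u v w by simp
  then have "eventually (\<lambda>L. \<forall>(m, n, p)\<in>?S. \<forall>a b.
      assoc_lhs V Y L (u m) (v n) (w p) a b = assoc_rhs V Y L (u m) (v n) (w p) a b) sequentially"
    using u v w rees_component_carrier
    by (intro eventually_ball_finite) (auto intro!: nva_weak_assoc_eventually[OF nva])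
  then obtain L where L: "\<forall>(m, n, p)\<in>?S. \<forall>a b.
      assoc_lhs V Y L (u m) (v n) (w p) a b = assoc_rhs V Y L (u m) (v n) (w p) a b"
    by (auto simp: eventually_sequentially)
  have "assoc_lhs V Y L (u m) (v n) (w p) a b = assoc_rhs V Y L (u m) (v n) (w p) a b"
    if "m \<in> supp u" "n \<in> supp v" for m n p a b
  proof (cases "p \<in> supp w")
    case True
    with L that show ?thesis by blast
  next
    case False
    then show ?thesis using assoc_zero_right[OF nva] u v rees_component_carrier that by (simp add: supp_iff)
  qed
  then show ?thesis using Rees_assoc[OF u v w] by blast
qed

lemma Rees_nonlocal_va: "nonlocal_va Rees (single 0 vac) reesY"
  unfolding nonlocal_va_def
proof (intro conjI ballI allI impI)
  show "module CR Rees" by (rule Rees_module)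
  show "single 0 vac \<in> carrier Rees" using single_rees[OF vac_F0] by simp
next
  fix u v n assume "u \<in> carrier Rees" "v \<in> carrier Rees"
  thus "reesY u n v \<in> carrier Rees" using reesY_closed by simp
next
  fix u u' v n assume "u \<in> carrier Rees" "u' \<in> carrier Rees" "v \<in> carrier Rees"
  thus "reesY (u \<oplus>\<^bsub>Rees\<^esub> u') n v = reesY u n v \<oplus>\<^bsub>Rees\<^esub> reesY u' n v" using reesY_add_left by simp
next
  fix c u v n assume "u \<in> carrier Rees" "v \<in> carrier Rees"
  thus "reesY (c \<odot>\<^bsub>Rees\<^esub> u) n v = c \<odot>\<^bsub>Rees\<^esub> reesY u n v" using reesY_smult_left by simp
next
  fix u v v' n assume "u \<in> carrier Rees" "v \<in> carrier Rees" "v' \<in> carrier Rees"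
  thus "reesY u n (v \<oplus>\<^bsub>Rees\<^esub> v') = reesY u n v \<oplus>\<^bsub>Rees\<^esub> reesY u n v'" using reesY_add_right by simp
next
  fix c u v n assume "u \<in> carrier Rees" "v \<in> carrier Rees"
  thus "reesY u n (c \<odot>\<^bsub>Rees\<^esub> v) = c \<odot>\<^bsub>Rees\<^esub> reesY u n v" using reesY_smult_right by simp
next
  fix u v assume "u \<in> carrier Rees" "v \<in> carrier Rees"
  thus "\<exists>N. \<forall>n\<ge>N. reesY u n v = \<zero>\<^bsub>Rees\<^esub>" using reesY_truncation by simp
next
  fix v n assume "v \<in> carrier Rees"
  thus "reesY (single 0 vac) n v = (if n = -1 then v else \<zero>\<^bsub>Rees\<^esub>)" using reesY_vacuum by simp
next
  fix v and n :: int assume "v \<in> carrier Rees" "0 \<le> n"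
  thus "reesY v n (single 0 vac) = \<zero>\<^bsub>Rees\<^esub>" using reesY_creation(1) by simp
next
  fix v assume "v \<in> carrier Rees"
  thus "reesY v (-1) (single 0 vac) = v" using reesY_creation(2) by simp
next
  fix u v w assume "u \<in> carrier Rees" "v \<in> carrier Rees" "w \<in> carrier Rees"
  thus "\<exists>l. \<forall>a b. assoc_lhs Rees reesY l u v w a b = assoc_rhs Rees reesY l u v w a b" using Rees_weak_assoc by simp
qed

subsection \<open>The associated graded space\<close>

lemma vcoset_add:
  assumes a: "a \<in> carrier V" and b: "b \<in> carrier V"
  shows "{p \<oplus>\<^bsub>V\<^esub> q |p q. p \<in> vcoset V (F n) a \<and> q \<in> vcoset V (F n) b} = vcoset V (F n) (a \<oplus>\<^bsub>V\<^esub> b)"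
proof
  show "{p \<oplus>\<^bsub>V\<^esub> q |p q. p \<in> vcoset V (F n) a \<and> q \<in> vcoset V (F n) b} \<subseteq> vcoset V (F n) (a \<oplus>\<^bsub>V\<^esub> b)"
  proof
    fix z assume "z \<in> {p \<oplus>\<^bsub>V\<^esub> q |p q. p \<in> vcoset V (F n) a \<and> q \<in> vcoset V (F n) b}"
    then obtain y1 y2 where y: "y1 \<in> F n" "y2 \<in> F n" "z = (a \<oplus>\<^bsub>V\<^esub> y1) \<oplus>\<^bsub>V\<^esub> (b \<oplus>\<^bsub>V\<^esub> y2)"
      unfolding vcoset_def by blast
    have "z = (a \<oplus>\<^bsub>V\<^esub> b) \<oplus>\<^bsub>V\<^esub> (y1 \<oplus>\<^bsub>V\<^esub> y2)" using y a b F_carrier by (simp add: V.a_ac)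
    thus "z \<in> vcoset V (F n) (a \<oplus>\<^bsub>V\<^esub> b)" unfolding vcoset_def using F_add y by blast
  qed
  show "vcoset V (F n) (a \<oplus>\<^bsub>V\<^esub> b) \<subseteq> {p \<oplus>\<^bsub>V\<^esub> q |p q. p \<in> vcoset V (F n) a \<and> q \<in> vcoset V (F n) b}"
  proof
    fix z assume "z \<in> vcoset V (F n) (a \<oplus>\<^bsub>V\<^esub> b)"
    then obtain y where y: "y \<in> F n" "z = (a \<oplus>\<^bsub>V\<^esub> b) \<oplus>\<^bsub>V\<^esub> y" unfolding vcoset_def by blast
    have "z = (a \<oplus>\<^bsub>V\<^esub> y) \<oplus>\<^bsub>V\<^esub> (b \<oplus>\<^bsub>V\<^esub> \<zero>\<^bsub>V\<^esub>)" using y a b F_carrier by (simp add: V.a_ac)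
    moreover have "a \<oplus>\<^bsub>V\<^esub> y \<in> vcoset V (F n) a" "b \<oplus>\<^bsub>V\<^esub> \<zero>\<^bsub>V\<^esub> \<in> vcoset V (F n) b"
      unfolding vcoset_def using y F_zero by blast+
    ultimately show "z \<in> {p \<oplus>\<^bsub>V\<^esub> q |p q. p \<in> vcoset V (F n) a \<and> q \<in> vcoset V (F n) b}" by blast
  qed
qed

lemma vcoset_smult:
  assumes a: "a \<in> carrier V"
  shows "{(c \<odot>\<^bsub>V\<^esub> p) \<oplus>\<^bsub>V\<^esub> q |p q. p \<in> vcoset V (F n) a \<and> q \<in> F n} = vcoset V (F n) (c \<odot>\<^bsub>V\<^esub> a)"
proof
  show "{(c \<odot>\<^bsub>V\<^esub> p) \<oplus>\<^bsub>V\<^esub> q |p q. p \<in> vcoset V (F n) a \<and> q \<in> F n} \<subseteq> vcoset V (F n) (c \<odot>\<^bsub>V\<^esub> a)"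
  proof
    fix z assume "z \<in> {(c \<odot>\<^bsub>V\<^esub> p) \<oplus>\<^bsub>V\<^esub> q |p q. p \<in> vcoset V (F n) a \<and> q \<in> F n}"
    then obtain y1 y2 where y: "y1 \<in> F n" "y2 \<in> F n" "z = (c \<odot>\<^bsub>V\<^esub> (a \<oplus>\<^bsub>V\<^esub> y1)) \<oplus>\<^bsub>V\<^esub> y2"
      unfolding vcoset_def by blast
    have "z = (c \<odot>\<^bsub>V\<^esub> a) \<oplus>\<^bsub>V\<^esub> (c \<odot>\<^bsub>V\<^esub> y1 \<oplus>\<^bsub>V\<^esub> y2)" using y a F_carrier by (simp add: V.a_ac V.smult_r_distr)
    thus "z \<in> vcoset V (F n) (c \<odot>\<^bsub>V\<^esub> a)" unfolding vcoset_def using F_add F_smult y by blast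
  qed
  show "vcoset V (F n) (c \<odot>\<^bsub>V\<^esub> a) \<subseteq> {(c \<odot>\<^bsub>V\<^esub> p) \<oplus>\<^bsub>V\<^esub> q |p q. p \<in> vcoset V (F n) a \<and> q \<in> F n}"
  proof
    fix z assume "z \<in> vcoset V (F n) (c \<odot>\<^bsub>V\<^esub> a)"
    then obtain y where y: "y \<in> F n" "z = (c \<odot>\<^bsub>V\<^esub> a) \<oplus>\<^bsub>V\<^esub> y" unfolding vcoset_def by blast
    moreover have "a \<in> vcoset V (F n) a" unfolding vcoset_def using F_zero a by force
    ultimately show "z \<in> {(c \<odot>\<^bsub>V\<^esub> p) \<oplus>\<^bsub>V\<^esub> q |p q. p \<in> vcoset V (F n) a \<and> q \<in> F n}" by blast
  qed
qed

lemma vcoset_zero: "vcoset V (F n) \<zero>\<^bsub>V\<^esub> = F n"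
proof -
  have h: "\<And>y. y \<in> F n \<Longrightarrow> \<zero>\<^bsub>V\<^esub> \<oplus>\<^bsub>V\<^esub> y = y" using F_carrier by simp
  show ?thesis unfolding vcoset_def
  proof
    show "{\<zero>\<^bsub>V\<^esub> \<oplus>\<^bsub>V\<^esub> y |y. y \<in> F n} \<subseteq> F n" using h by auto
    show "F n \<subseteq> {\<zero>\<^bsub>V\<^esub> \<oplus>\<^bsub>V\<^esub> y |y. y \<in> F n}"
    proof
      fix y assume "y \<in> F n"
      thus "y \<in> {\<zero>\<^bsub>V\<^esub> \<oplus>\<^bsub>V\<^esub> y |y. y \<in> F n}" using h[of y] by force
    qed
  qed
qed

lemma vcoset_shift:
  assumes a: "a \<in> carrier V" and z: "z \<in> F n"
  shows "vcoset V (F n) (a \<oplus>\<^bsub>V\<^esub> z) = vcoset V (F n) a"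
proof
  show "vcoset V (F n) (a \<oplus>\<^bsub>V\<^esub> z) \<subseteq> vcoset V (F n) a"
  proof
    fix p assume "p \<in> vcoset V (F n) (a \<oplus>\<^bsub>V\<^esub> z)"
    then obtain y where y: "y \<in> F n" "p = a \<oplus>\<^bsub>V\<^esub> z \<oplus>\<^bsub>V\<^esub> y" unfolding vcoset_def by blast
    hence "p = a \<oplus>\<^bsub>V\<^esub> (z \<oplus>\<^bsub>V\<^esub> y)" using a z F_carrier by (simp add: V.a_ac)
    thus "p \<in> vcoset V (F n) a" unfolding vcoset_def using F_add z y by blast
  qed
  show "vcoset V (F n) a \<subseteq> vcoset V (F n) (a \<oplus>\<^bsub>V\<^esub> z)"
  proof
    fix p assume "p \<in> vcoset V (F n) a"
    then obtain y where y: "y \<in> F n" "p = a \<oplus>\<^bsub>V\<^esub> y" unfolding vcoset_def by blast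
    hence "p = a \<oplus>\<^bsub>V\<^esub> z \<oplus>\<^bsub>V\<^esub> (\<ominus>\<^bsub>V\<^esub> z \<oplus>\<^bsub>V\<^esub> y)" using a z F_carrier by (simp add: V.a_assoc V.r_neg2)
    thus "p \<in> vcoset V (F n) (a \<oplus>\<^bsub>V\<^esub> z)" unfolding vcoset_def using F_add F_neg z y by blast
  qed
qed

lemma vcoset_eqD:
  assumes a: "a \<in> carrier V" and b: "b \<in> carrier V" and e: "vcoset V (F n) a = vcoset V (F n) b"
  shows "\<ominus>\<^bsub>V\<^esub> b \<oplus>\<^bsub>V\<^esub> a \<in> F n"
proof -
  have "a \<in> vcoset V (F n) a" unfolding vcoset_def using F_zero a by force
  then obtain y where y: "y \<in> F n" "a = b \<oplus>\<^bsub>V\<^esub> y" using e unfolding vcoset_def by blast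
  hence "\<ominus>\<^bsub>V\<^esub> b \<oplus>\<^bsub>V\<^esub> a = y" using b F_carrier by (simp add: V.r_neg1)
  thus ?thesis using y by simp
qed

lemma vcoset_absorb: "a \<in> F n \<Longrightarrow> vcoset V (F n) a = F n"
  using vcoset_shift[of "\<zero>\<^bsub>V\<^esub>" a n] vcoset_zero F_carrier by simp

definition gr_class :: "(int \<Rightarrow> 'v) \<Rightarrow> int \<Rightarrow> 'v set" where
  "gr_class x = (\<lambda>n. vcoset V (F (n - 1)) (x n))"

definition gr_rep :: "(int \<Rightarrow> 'v set) \<Rightarrow> int \<Rightarrow> 'v" where
  "gr_rep g = (SOME x. x \<in> rees \<and> gr_class x = g)"

text \<open>Well defined, i.e. independent of the representatives, by \<open>gr_class_reesY\<close> below.\<close>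

definition gr_Y :: "(int \<Rightarrow> 'v set) vop" where
  "gr_Y g k h = gr_class (reesY (gr_rep g) k (gr_rep h))"

lemma Gr_simps[simp]: "carrier (Gr V F) = gr_carrier V F" "g \<oplus>\<^bsub>Gr V F\<^esub> h = gr_add V g h"
  "c \<odot>\<^bsub>Gr V F\<^esub> g = gr_smult V F c g" "\<zero>\<^bsub>Gr V F\<^esub> = gr_zero F"
  by (simp_all add: Gr_def)

lemma gr_class_carrier: "x \<in> rees \<Longrightarrow> gr_class x \<in> gr_carrier V F"
proof -
  assume x: "x \<in> rees"
  have "{n. gr_class x n \<noteq> F (n - 1)} \<subseteq> supp x" unfolding gr_class_def supp_def using vcoset_zero by auto
  hence "finite {n. gr_class x n \<noteq> F (n - 1)}" using rees_finite_supp[OF x] finite_subset by blast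
  moreover have "\<forall>n. \<exists>y\<in>F n. gr_class x n = vcoset V (F (n - 1)) y" unfolding gr_class_def using rees_component[OF x] by blast
  ultimately show ?thesis unfolding gr_carrier_def by blast
qed

lemma gr_class_surj: "gr_class ` rees = gr_carrier V F"
proof
  show "gr_class ` rees \<subseteq> gr_carrier V F" using gr_class_carrier by blast
  show "gr_carrier V F \<subseteq> gr_class ` rees"
  proof
    fix g assume g: "g \<in> gr_carrier V F"
    hence ex: "\<forall>n. \<exists>y\<in>F n. g n = vcoset V (F (n - 1)) y" and fin: "finite {n. g n \<noteq> F (n - 1)}"
      unfolding gr_carrier_def by blast+
    define x where "x = (\<lambda>n. if g n = F (n - 1) then \<zero>\<^bsub>V\<^esub> else (SOME y. y \<in> F n \<and> g n = vcoset V (F (n - 1)) y))"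
    have xs: "x n \<in> F n \<and> g n = vcoset V (F (n - 1)) (x n)" for n
    proof (cases "g n = F (n - 1)")
      case True thus ?thesis unfolding x_def using F_zero vcoset_zero by simp
    next
      case False thus ?thesis unfolding x_def using someI_ex[of "\<lambda>y. y \<in> F n \<and> g n = vcoset V (F (n - 1)) y"] ex by auto
    qed
    have "supp x \<subseteq> {n. g n \<noteq> F (n - 1)}" unfolding supp_def x_def by auto
    hence "x \<in> rees" using xs fin finite_subset by (intro reesI) auto
    moreover have "gr_class x = g" unfolding gr_class_def using xs by auto
    ultimately show "g \<in> gr_class ` rees" by blast
  qed
qed

lemma gr_rep_spec: "g \<in> gr_carrier V F \<Longrightarrow> gr_rep g \<in> rees \<and> gr_class (gr_rep g) = g"
proof -
  assume g: "g \<in> gr_carrier V F"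
  hence "g \<in> gr_class ` rees" using gr_class_surj by simp
  then obtain x where "x \<in> rees" "g = gr_class x" by (rule imageE)
  hence "\<exists>x. x \<in> rees \<and> gr_class x = g" by blast
  from someI_ex[OF this] show ?thesis unfolding gr_rep_def .
qed

lemma gr_class_add: "x \<in> rees \<Longrightarrow> y \<in> rees \<Longrightarrow> gr_class (x \<oplus>\<^bsub>Rees\<^esub> y) = gr_add V (gr_class x) (gr_class y)"
  unfolding gr_class_def gr_add_def Rees_simps(2) by (rule ext, rule vcoset_add[symmetric]) (simp_all add: rees_component_carrier)

lemma gr_class_smult: "x \<in> rees \<Longrightarrow> gr_class (c \<odot>\<^bsub>Rees\<^esub> x) = gr_smult V F c (gr_class x)"
  unfolding gr_class_def gr_smult_def Rees_simps(3) by (rule ext, rule vcoset_smult[symmetric]) (simp add: rees_component_carrier)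

lemma gr_class_zero: "gr_class \<zero>\<^bsub>Rees\<^esub> = gr_zero F"
  unfolding gr_class_def gr_zero_def Rees_simps(4) by (rule ext, rule vcoset_zero)

lemma gr_class_eqD:
  assumes x: "x \<in> rees" and x': "x' \<in> rees" and e: "gr_class x' = gr_class x"
  shows "\<ominus>\<^bsub>V\<^esub> x n \<oplus>\<^bsub>V\<^esub> x' n \<in> F (n - 1)"
proof -
  have "gr_class x' n = gr_class x n" using e by simp
  thus ?thesis unfolding gr_class_def by (rule vcoset_eqD[OF rees_component_carrier[OF x'] rees_component_carrier[OF x]])
qed

lemma gr_class_reesY:
  assumes x: "x \<in> rees" and y: "y \<in> rees"
  shows "gr_Y (gr_class x) k (gr_class y) = gr_class (reesY x k y)"
proof -
  define x' where "x' = gr_rep (gr_class x)"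
  define y' where "y' = gr_rep (gr_class y)"
  have x': "x' \<in> rees" "gr_class x' = gr_class x" using gr_rep_spec[OF gr_class_carrier[OF x]] unfolding x'_def by auto
  have y': "y' \<in> rees" "gr_class y' = gr_class y" using gr_rep_spec[OF gr_class_carrier[OF y]] unfolding y'_def by auto
  define dx where "dx = (\<lambda>n. \<ominus>\<^bsub>V\<^esub> x n \<oplus>\<^bsub>V\<^esub> x' n)"
  define dy where "dy = (\<lambda>n. \<ominus>\<^bsub>V\<^esub> y n \<oplus>\<^bsub>V\<^esub> y' n)"
  have dx: "dx \<in> rees" "\<And>n. dx n \<in> F (n - 1)" unfolding dx_def
    using rees_add[OF rees_neg[OF x] x'(1)] gr_class_eqD[OF x x'] by auto
  have dy: "dy \<in> rees" "\<And>n. dy n \<in> F (n - 1)" unfolding dy_def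
    using rees_add[OF rees_neg[OF y] y'(1)] gr_class_eqD[OF y y'] by auto
  have ex': "x' = (\<lambda>n. x n \<oplus>\<^bsub>V\<^esub> dx n)" unfolding dx_def using x x' rees_component_carrier by (auto simp: V.r_neg2)
  have ey': "y' = (\<lambda>n. y n \<oplus>\<^bsub>V\<^esub> dy n)" unfolding dy_def using y y' rees_component_carrier by (auto simp: V.r_neg2)
  have "reesY x' k y' D = reesY x k y D \<oplus>\<^bsub>V\<^esub> (reesY x k dy D \<oplus>\<^bsub>V\<^esub> reesY dx k y' D)" for D
  proof -
    have "reesY x' k y' D = reesY x k y' D \<oplus>\<^bsub>V\<^esub> reesY dx k y' D" using reesY_add_left[OF x dx(1) y'(1)] ex' by simp
    also have "reesY x k y' D = reesY x k y D \<oplus>\<^bsub>V\<^esub> reesY x k dy D" using reesY_add_right[OF x y dy(1)] ey' by simp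
    finally show ?thesis using reesY_carrier x y y' dx dy by (simp add: V.a_assoc)
  qed
  hence "gr_class (reesY x' k y') = gr_class (reesY x k y)"
  proof -
    assume h: "\<And>D. reesY x' k y' D = reesY x k y D \<oplus>\<^bsub>V\<^esub> (reesY x k dy D \<oplus>\<^bsub>V\<^esub> reesY dx k y' D)"
    show ?thesis unfolding gr_class_def
    proof (rule ext)
      fix D
      have "reesY x k dy D \<oplus>\<^bsub>V\<^esub> reesY dx k y' D \<in> F (D - 1)"
        using F_add reesY_lower_right[OF x dy] reesY_lower_left[OF dx(1,2) y'(1)] by blast
      thus "vcoset V (F (D - 1)) (reesY x' k y' D) = vcoset V (F (D - 1)) (reesY x k y D)"
        unfolding h by (rule vcoset_shift[OF reesY_carrier[OF x y]])
    qed
  qed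
  thus ?thesis unfolding gr_Y_def x'_def y'_def by simp
qed

lemma gr_class_single: "a \<in> F n \<Longrightarrow> gr_class (single n a) = gr_hom V F n a"
  unfolding gr_class_def single_def gr_hom_def using vcoset_zero by (auto intro!: ext)

lemma gr_class_epimorphism: "nva_epimorphism Rees (single 0 vac) reesY (Gr V F) gr_Y gr_class"
proof
  show "gr_class ` carrier Rees = carrier (Gr V F)" using gr_class_surj by simp
qed (simp_all add: Rees_nonlocal_va gr_class_add[simplified] gr_class_smult[simplified]
    gr_class_zero[simplified] gr_class_reesY)

lemma Gr_nonlocal_va: "nonlocal_va (Gr V F) (gr_hom V F 0 vac) gr_Y"
  using nva_epimorphism.nonlocal_va_image[OF gr_class_epimorphism] gr_class_single[OF vac_F0] by simp

lemma Gr_module: "module CR (Gr V F)"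
  by (rule nva_epimorphism.module_image[OF gr_class_epimorphism])

lemma gr_hom_carrier: "a \<in> F n \<Longrightarrow> gr_hom V F n a \<in> gr_carrier V F"
  using gr_class_carrier[OF single_rees] gr_class_single by metis

lemma gr_hom_zero: "gr_hom V F n \<zero>\<^bsub>V\<^esub> = gr_zero F"
  unfolding gr_hom_def gr_zero_def by (intro ext) (simp add: vcoset_zero)

lemma gr_hom_eq_zero: "a \<in> F (n - 1) \<Longrightarrow> gr_hom V F n a = gr_zero F"
  unfolding gr_hom_def gr_zero_def by (intro ext) (simp add: vcoset_absorb)

lemma gr_hom_add:
  assumes "a \<in> F n" "b \<in> F n"
  shows "gr_add V (gr_hom V F n a) (gr_hom V F n b) = gr_hom V F n (a \<oplus>\<^bsub>V\<^esub> b)"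
proof -
  have "single n a \<oplus>\<^bsub>Rees\<^esub> single n b = single n (a \<oplus>\<^bsub>V\<^esub> b)" unfolding single_def by (auto intro!: ext)
  thus ?thesis using gr_class_add[OF single_rees single_rees, OF assms] gr_class_single assms F_add by metis
qed

lemma gr_hom_smult:
  assumes "a \<in> F n"
  shows "gr_smult V F c (gr_hom V F n a) = gr_hom V F n (c \<odot>\<^bsub>V\<^esub> a)"
proof -
  have "c \<odot>\<^bsub>Rees\<^esub> single n a = single n (c \<odot>\<^bsub>V\<^esub> a)" unfolding single_def using smult_zero_right_CR[OF V.module_axioms] by (auto intro!: ext)
  thus ?thesis using gr_class_smult[OF single_rees, OF assms] gr_class_single assms F_smult by metis
qed

lemma reesY_single_single:
  assumes a: "a \<in> F m" and b: "b \<in> F n"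
  shows "reesY (single m a) k (single n b) = single (m + n - k - 1) (Y a k b)"
proof
  fix D
  show "reesY (single m a) k (single n b) D = single (m + n - k - 1) (Y a k b) D"
    unfolding reesY_single_left[OF a single_rees[OF b]] using Y_zero_right F_carrier a by (auto simp: single_def)
qed

lemma gr_Y_hom:
  assumes a: "a \<in> F m" and b: "b \<in> F n"
  shows "gr_Y (gr_hom V F m a) k (gr_hom V F n b) = gr_hom V F (m + n - k - 1) (Y a k b)"
proof -
  have "gr_Y (gr_hom V F m a) k (gr_hom V F n b) = gr_class (reesY (single m a) k (single n b))"
    using gr_class_reesY[OF single_rees[OF a] single_rees[OF b]] gr_class_single[OF a] gr_class_single[OF b] by simp
  also have "\<dots> = gr_hom V F (m + n - k - 1) (Y a k b)"
    using reesY_single_single[OF a b] gr_class_single compat[OF a b] by simp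
  finally show ?thesis .
qed

lemma gr_hom_neg:
  assumes a: "a \<in> F n"
  shows "\<ominus>\<^bsub>Gr V F\<^esub> gr_hom V F n a = gr_hom V F n (\<ominus>\<^bsub>V\<^esub> a)"
proof -
  interpret g: module CR "Gr V F" by (rule Gr_module)
  have "\<ominus>\<^bsub>V\<^esub> a \<oplus>\<^bsub>V\<^esub> a = \<zero>\<^bsub>V\<^esub>" using a F_carrier by (simp add: V.l_neg)
  hence h: "gr_hom V F n (\<ominus>\<^bsub>V\<^esub> a) \<oplus>\<^bsub>Gr V F\<^esub> gr_hom V F n a = \<zero>\<^bsub>Gr V F\<^esub>"
    using gr_hom_add[OF F_neg[OF a] a] gr_hom_zero by simp
  show ?thesis
    by (rule g.minus_equality[OF h]) (use a gr_hom_carrier F_neg in simp_all)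
qed

lemma Gr_finsum_gr_hom:
  assumes A: "finite A" and a: "\<And>n. a n \<in> F n"
  shows "finsum (Gr V F) (\<lambda>n. gr_hom V F n (a n)) A = gr_class (\<lambda>D. if D \<in> A then a D else \<zero>\<^bsub>V\<^esub>)"
proof -
  have ac: "\<And>n. a n \<in> carrier V" using a F_carrier by blast
  have "finsum (Gr V F) (\<lambda>n. gr_hom V F n (a n)) A = finsum (Gr V F) (\<lambda>n. gr_class (single n (a n))) A"
    using gr_class_single a by simp
  also have "\<dots> = gr_class (finsum Rees (\<lambda>n. single n (a n)) A)"
  proof (rule module_hom_finsum[OF Rees_module Gr_module _ _ _ A, symmetric])
    show "\<And>x y. x \<in> carrier Rees \<Longrightarrow> y \<in> carrier Rees \<Longrightarrow> gr_class (x \<oplus>\<^bsub>Rees\<^esub> y) = gr_class x \<oplus>\<^bsub>Gr V F\<^esub> gr_class y"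
      using gr_class_add by simp
    show "gr_class \<zero>\<^bsub>Rees\<^esub> = \<zero>\<^bsub>Gr V F\<^esub>" using gr_class_zero by simp
    show "\<And>x. x \<in> carrier Rees \<Longrightarrow> gr_class x \<in> carrier (Gr V F)" using gr_class_carrier by simp
    show "(\<lambda>n. single n (a n)) \<in> A \<rightarrow> carrier Rees" using single_rees a by simp
  qed
  also have "finsum Rees (\<lambda>n. single n (a n)) A = (\<lambda>D. finsum V (\<lambda>n. single n (a n) D) A)"
    using Rees_finsum[OF A] single_rees a by simp
  also have "\<dots> = (\<lambda>D. if D \<in> A then a D else \<zero>\<^bsub>V\<^esub>)"
  proof
    fix D
    show "finsum V (\<lambda>n. single n (a n) D) A = (if D \<in> A then a D else \<zero>\<^bsub>V\<^esub>)"
    proof (cases "D \<in> A")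
      case True
      have "finsum V (\<lambda>n. single n (a n) D) A = finsum V (\<lambda>n. if D = n then a n else \<zero>\<^bsub>V\<^esub>) A"
        unfolding single_def by (intro V.finsum_cong') (auto simp: Pi_def ac)
      also have "\<dots> = a D" using V.finsum_singleton[OF True A, of a] ac by (simp add: Pi_def)
      finally show ?thesis using True by simp
    next
      case False
      have "finsum V (\<lambda>n. single n (a n) D) A = \<zero>\<^bsub>V\<^esub>" unfolding single_def by (rule V.add.finprod_one_eqI) (use False in auto)
      thus ?thesis using False by simp
    qed
  qed
  finally show ?thesis .
qed

lemma gr_components_unique:
  assumes f: "\<forall>n. f n \<in> gr_grading V F n" and fin: "finite {n. f n \<noteq> gr_zero F}"
    and g: "g = finsum (Gr V F) f {n. f n \<noteq> gr_zero F}"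
  shows "f n = (\<lambda>m. if m = n then g n else F (m - 1))"
proof -
  have "\<forall>n. \<exists>a. a \<in> F n \<and> f n = gr_hom V F n a" using f unfolding gr_grading_def by blast
  then obtain a where a: "\<And>n. a n \<in> F n" "\<And>n. f n = gr_hom V F n (a n)" by metis
  let ?A = "{n. f n \<noteq> gr_zero F}"
  have fa: "f = (\<lambda>n. gr_hom V F n (a n))" using a(2) by auto
  have "g = finsum (Gr V F) (\<lambda>n. gr_hom V F n (a n)) ?A" using g by (simp add: fa)
  also have "\<dots> = gr_class (\<lambda>D. if D \<in> ?A then a D else \<zero>\<^bsub>V\<^esub>)" by (rule Gr_finsum_gr_hom[OF fin a(1)])
  finally have gn: "g n = vcoset V (F (n - 1)) (if n \<in> ?A then a n else \<zero>\<^bsub>V\<^esub>)" unfolding gr_class_def by simp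
  show ?thesis
  proof (cases "n \<in> ?A")
    case True
    thus ?thesis using gn a(2)[of n] unfolding gr_hom_def by (auto intro!: ext)
  next
    case False
    hence "f n = gr_zero F" by simp
    thus ?thesis using gn False vcoset_zero unfolding gr_zero_def by (auto simp: fun_eq_iff)
  qed
qed

lemma gr_decomposition:
  assumes g: "g \<in> gr_carrier V F"
  obtains x where "x \<in> rees" "\<forall>n. gr_hom V F n (x n) \<in> gr_grading V F n" "finite {n. gr_hom V F n (x n) \<noteq> gr_zero F}"
     "g = finsum (Gr V F) (\<lambda>n. gr_hom V F n (x n)) {n. gr_hom V F n (x n) \<noteq> gr_zero F}"
proof -
  define x where "x = gr_rep g"
  have x: "x \<in> rees" "gr_class x = g" using gr_rep_spec[OF g] unfolding x_def by auto
  let ?A = "{n. gr_hom V F n (x n) \<noteq> gr_zero F}"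
  have "?A \<subseteq> supp x" unfolding supp_def using gr_hom_zero by auto
  hence fin: "finite ?A" using rees_finite_supp[OF x(1)] finite_subset by blast
  have "finsum (Gr V F) (\<lambda>n. gr_hom V F n (x n)) ?A = gr_class (\<lambda>D. if D \<in> ?A then x D else \<zero>\<^bsub>V\<^esub>)"
    by (rule Gr_finsum_gr_hom[OF fin rees_component[OF x(1)]])
  also have "\<dots> = gr_class x" unfolding gr_class_def
  proof (rule ext)
    fix D
    show "vcoset V (F (D - 1)) (if D \<in> ?A then x D else \<zero>\<^bsub>V\<^esub>) = vcoset V (F (D - 1)) (x D)"
    proof (cases "D \<in> ?A")
      case False
      hence "gr_hom V F D (x D) D = gr_zero F D" by simp
      hence "vcoset V (F (D - 1)) (x D) = F (D - 1)" unfolding gr_hom_def gr_zero_def by simp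
      thus ?thesis using False vcoset_zero by simp
    qed simp
  qed
  finally have e: "finsum (Gr V F) (\<lambda>n. gr_hom V F n (x n)) ?A = gr_class x" .
  show ?thesis
  proof (rule that[OF x(1) _ fin])
    show "\<forall>n. gr_hom V F n (x n) \<in> gr_grading V F n" using rees_component[OF x(1)] unfolding gr_grading_def by simp
    show "g = finsum (Gr V F) (\<lambda>n. gr_hom V F n (x n)) ?A" using e x(2) by simp
  qed
qed

lemma gr_grading_submodule: "submodule (gr_grading V F n) CR (Gr V F)"
proof -
  interpret Gr: module CR "Gr V F" by (rule Gr_module)
  show ?thesis
  proof (rule Gr.submoduleI)
    show "gr_grading V F n \<subseteq> carrier (Gr V F)" unfolding gr_grading_def using gr_hom_carrier by auto
    show "\<zero>\<^bsub>Gr V F\<^esub> \<in> gr_grading V F n"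
      unfolding gr_grading_def using gr_hom_zero F_zero by (simp add: image_iff) metis
  next
    fix u assume "u \<in> gr_grading V F n"
    then show "\<ominus>\<^bsub>Gr V F\<^esub> u \<in> gr_grading V F n" unfolding gr_grading_def using F_neg gr_hom_neg by auto
  next
    fix u v assume "u \<in> gr_grading V F n" "v \<in> gr_grading V F n"
    then show "u \<oplus>\<^bsub>Gr V F\<^esub> v \<in> gr_grading V F n" unfolding gr_grading_def using gr_hom_add F_add by auto
  next
    fix c u assume "u \<in> gr_grading V F n"
    then show "c \<odot>\<^bsub>Gr V F\<^esub> u \<in> gr_grading V F n" unfolding gr_grading_def using gr_hom_smult F_smult by auto
  qed
qed

lemma Gr_direct_sum_decomp: "direct_sum_decomp (Gr V F) (gr_grading V F)"
  unfolding direct_sum_decomp_def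
proof (intro conjI allI ballI)
  show "submodule (gr_grading V F n) CR (Gr V F)" for n by (rule gr_grading_submodule)
next
  fix g assume g: "g \<in> carrier (Gr V F)"
  hence gc: "g \<in> gr_carrier V F" by simp
  obtain x where x: "x \<in> rees" "\<forall>n. gr_hom V F n (x n) \<in> gr_grading V F n" "finite {n. gr_hom V F n (x n) \<noteq> gr_zero F}"
     "g = finsum (Gr V F) (\<lambda>n. gr_hom V F n (x n)) {n. gr_hom V F n (x n) \<noteq> gr_zero F}"
    by (rule gr_decomposition[OF gc])
  show "\<exists>!f. (\<forall>n. f n \<in> gr_grading V F n) \<and> finite {n. f n \<noteq> \<zero>\<^bsub>Gr V F\<^esub>} \<and> g = finsum (Gr V F) f {n. f n \<noteq> \<zero>\<^bsub>Gr V F\<^esub>}"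
  proof (rule ex1I[of _ "\<lambda>n. gr_hom V F n (x n)"])
    show "(\<forall>n. gr_hom V F n (x n) \<in> gr_grading V F n) \<and> finite {n. gr_hom V F n (x n) \<noteq> \<zero>\<^bsub>Gr V F\<^esub>} \<and>
      g = finsum (Gr V F) (\<lambda>n. gr_hom V F n (x n)) {n. gr_hom V F n (x n) \<noteq> \<zero>\<^bsub>Gr V F\<^esub>}" using x by simp
    fix f assume "(\<forall>n. f n \<in> gr_grading V F n) \<and> finite {n. f n \<noteq> \<zero>\<^bsub>Gr V F\<^esub>} \<and> g = finsum (Gr V F) f {n. f n \<noteq> \<zero>\<^bsub>Gr V F\<^esub>}"
    hence H: "\<forall>n. f n \<in> gr_grading V F n" "finite {n. f n \<noteq> gr_zero F}" "g = finsum (Gr V F) f {n. f n \<noteq> gr_zero F}"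
      by simp_all
    have "f n = (\<lambda>m. if m = n then g n else F (m - 1))" for n by (rule gr_components_unique[OF H])
    moreover have "gr_hom V F n (x n) = (\<lambda>m. if m = n then g n else F (m - 1))" for n
      by (rule gr_components_unique[OF x(2,3,4)])
    ultimately show "f = (\<lambda>n. gr_hom V F n (x n))" by (intro ext) simp
  qed
qed

lemma Gr_graded_nonlocal_va: "graded_nonlocal_va (Gr V F) (gr_hom V F 0 vac) gr_Y (gr_grading V F)"
  unfolding graded_nonlocal_va_def
proof (intro conjI allI impI)
  show "nonlocal_va (Gr V F) (gr_hom V F 0 vac) gr_Y" by (rule Gr_nonlocal_va)
  show "direct_sum_decomp (Gr V F) (gr_grading V F)" by (rule Gr_direct_sum_decomp)
  show "gr_hom V F 0 vac \<in> gr_grading V F 0" unfolding gr_grading_def using vac_F0 by simp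
next
  fix m n k u v assume "u \<in> gr_grading V F m" "v \<in> gr_grading V F n"
  then obtain a b where ab: "a \<in> F m" "u = gr_hom V F m a" "b \<in> F n" "v = gr_hom V F n b" unfolding gr_grading_def by blast
  thus "gr_Y u k v \<in> gr_grading V F (m + n - k - 1)" unfolding gr_grading_def using gr_Y_hom compat by simp
qed

lemma gr_hom_preimage_submodule:
  assumes "submodule S CR (Gr V F)"
  shows "submodule {a \<in> F n. gr_hom V F n a \<in> S} CR V"
proof -
  interpret Gr: module CR "Gr V F" by (rule Gr_module)
  note S = Gr.submoduleE[OF assms]
  show ?thesis
  proof (rule V.submoduleI)
    show "{a \<in> F n. gr_hom V F n a \<in> S} \<subseteq> carrier V" using F_carrier by blast
    have "\<zero>\<^bsub>Gr V F\<^esub> \<in> S" using assms by (simp add: submodule_def subgroup_def)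
    then show "\<zero>\<^bsub>V\<^esub> \<in> {a \<in> F n. gr_hom V F n a \<in> S}" using F_zero gr_hom_zero by simp
  next
    fix a assume "a \<in> {a \<in> F n. gr_hom V F n a \<in> S}"
    then have a: "a \<in> F n" "gr_hom V F n a \<in> S" by auto
    then show "\<ominus>\<^bsub>V\<^esub> a \<in> {a \<in> F n. gr_hom V F n a \<in> S}"
      using S(3)[OF a(2)] F_neg[OF a(1)] gr_hom_neg[OF a(1)] by simp
  next
    fix a b assume "a \<in> {a \<in> F n. gr_hom V F n a \<in> S}" "b \<in> {a \<in> F n. gr_hom V F n a \<in> S}"
    then have ab: "a \<in> F n" "gr_hom V F n a \<in> S" "b \<in> F n" "gr_hom V F n b \<in> S" by auto
    then show "a \<oplus>\<^bsub>V\<^esub> b \<in> {a \<in> F n. gr_hom V F n a \<in> S}"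
      using S(5)[OF ab(2,4)] F_add[OF ab(1,3)] gr_hom_add[OF ab(1,3)] by simp
  next
    fix c a assume "a \<in> {a \<in> F n. gr_hom V F n a \<in> S}"
    then have a: "a \<in> F n" "gr_hom V F n a \<in> S" by auto
    then show "c \<odot>\<^bsub>V\<^esub> a \<in> {a \<in> F n. gr_hom V F n a \<in> S}"
      using S(4)[OF _ a(2)] F_smult[OF a(1)] gr_hom_smult[OF a(1)] by simp
  qed
qed

context
  fixes T :: "'v set" and S :: "(int \<Rightarrow> 'v set) set"
  assumes F_assoc: "F = assoc_filtration V vac Y T" and T: "T \<subseteq> carrier V"
    and S: "nonlocal_subalgebra (Gr V F) (gr_hom V F 0 vac) gr_Y S" and T_S: "gr_hom V F 1 ` T \<subseteq> S"
begin

lemma gr_hom_word_in_subalgebra: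
  "set (map fst ws) \<subseteq> T \<Longrightarrow> gr_hom V F (- sum_list (map snd ws)) (word_val Y vac ws) \<in> S"
proof (induct ws)
  case Nil
  then show ?case using S by (simp add: nonlocal_subalgebra_def)
next
  case (Cons p ws)
  obtain u m where p: "p = (u, m)" by (cases p)
  have u: "u \<in> T" "u \<in> F 1" using Cons.prems p generators_in_assoc_filtration[OF nva T] F_assoc by auto
  have ws: "set (map fst ws) \<subseteq> T" using Cons.prems by simp
  then have "word_val Y vac ws \<in> F (- sum_list (map snd ws))"
    using F_assoc word_val_in_assoc_filtration by simp
  then have "gr_Y (gr_hom V F 1 u) m (gr_hom V F (- sum_list (map snd ws)) (word_val Y vac ws)) =
      gr_hom V F (1 + - sum_list (map snd ws) - m - 1) (Y u m (word_val Y vac ws))"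
    by (rule gr_Y_hom[OF u(2)])
  also have "\<dots> = gr_hom V F (- sum_list (map snd (p # ws))) (word_val Y vac (p # ws))"
    using p by (simp add: algebra_simps)
  finally have "gr_Y (gr_hom V F 1 u) m (gr_hom V F (- sum_list (map snd ws)) (word_val Y vac ws)) =
      gr_hom V F (- sum_list (map snd (p # ws))) (word_val Y vac (p # ws))" .
  moreover have "gr_Y (gr_hom V F 1 u) m (gr_hom V F (- sum_list (map snd ws)) (word_val Y vac ws)) \<in> S"
    using S T_S Cons.hyps[OF ws] u(1) by (auto simp: nonlocal_subalgebra_def)
  ultimately show ?case by simp
qed

lemma gr_hom_in_subalgebra:
  assumes "a \<in> F n"
  shows "gr_hom V F n a \<in> S"
proof -
  let ?H = "{a \<in> F n. gr_hom V F n a \<in> S}"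
  have zero_S: "gr_zero F \<in> S"
    using S by (simp add: nonlocal_subalgebra_def submodule_def subgroup_def)
  have "word_val Y vac ws \<in> ?H"
    if ws: "set (map fst ws) \<subseteq> T" "sum_list (map snd ws) \<ge> - n" for ws
  proof (cases "- sum_list (map snd ws) = n")
    case True
    then show ?thesis using gr_hom_word_in_subalgebra[OF ws(1)]
      word_val_in_assoc_filtration[OF ws(1), of Y vac V] F_assoc by auto
  next
    case False
    then have "F (- sum_list (map snd ws)) \<subseteq> F (n - 1)" using ws(2) by (intro F_mono) simp
    moreover have "word_val Y vac ws \<in> F (- sum_list (map snd ws))"
      using word_val_in_assoc_filtration[OF ws(1), of Y vac V] F_assoc by simp
    ultimately have "word_val Y vac ws \<in> F (n - 1)" "word_val Y vac ws \<in> F n"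
      using F_mono[of "n - 1" n] by auto
    then show ?thesis using gr_hom_eq_zero zero_S by simp
  qed
  then have "{word_val Y vac ws | ws. set (map fst ws) \<subseteq> T \<and> sum_list (map snd ws) \<ge> - n \<and>
      (n < 0 \<longrightarrow> ws \<noteq> [])} \<subseteq> ?H" by blast
  moreover have "submodule ?H CR V"
    using S by (intro gr_hom_preimage_submodule) (simp add: nonlocal_subalgebra_def)
  ultimately have "lin_span V {word_val Y vac ws | ws. set (map fst ws) \<subseteq> T \<and>
      sum_list (map snd ws) \<ge> - n \<and> (n < 0 \<longrightarrow> ws \<noteq> [])} \<subseteq> ?H"
    by (rule lin_span_least[rotated])
  moreover have "F n = lin_span V {word_val Y vac ws | ws. set (map fst ws) \<subseteq> T \<and>
      sum_list (map snd ws) \<ge> - n \<and> (n < 0 \<longrightarrow> ws \<noteq> [])}"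
    unfolding F_assoc assoc_filtration_def ..
  ultimately have "F n \<subseteq> ?H" by simp
  then show ?thesis using assms by blast
qed

lemma Gr_carrier_subset_subalgebra: "carrier (Gr V F) \<subseteq> S"
proof
  interpret Gr: module CR "Gr V F" by (rule Gr_module)
  fix g assume "g \<in> carrier (Gr V F)"
  then have "g \<in> gr_carrier V F" by simp
  then obtain x where x: "x \<in> rees" "\<forall>n. gr_hom V F n (x n) \<in> gr_grading V F n"
    "finite {n. gr_hom V F n (x n) \<noteq> gr_zero F}"
    "g = (\<Oplus>\<^bsub>Gr V F\<^esub>n\<in>{n. gr_hom V F n (x n) \<noteq> gr_zero F}. gr_hom V F n (x n))"
    by (rule gr_decomposition)
  show "g \<in> S" unfolding x(4)
    using S x(1,3) rees_component gr_hom_in_subalgebra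
    by (intro Gr.finsum_in_submodule) (auto simp: nonlocal_subalgebra_def)
qed

end

lemma Gr_generating_subset:
  assumes gen: "generating_subset V vac Y T" and F_assoc: "F = assoc_filtration V vac Y T"
  shows "T \<subseteq> F 1 \<and> generating_subset (Gr V F) (gr_hom V F 0 vac) gr_Y (gr_hom V F 1 ` T)"
proof -
  interpret Gr: module CR "Gr V F" by (rule Gr_module)
  have T: "T \<subseteq> carrier V" using gen unfolding generating_subset_def by blast
  then have T_F1: "T \<subseteq> F 1" using generators_in_assoc_filtration[OF nva] F_assoc by simp
  have "nonlocal_subalgebra (Gr V F) (gr_hom V F 0 vac) gr_Y (carrier (Gr V F))"
    unfolding nonlocal_subalgebra_def
    using Gr.carrier_is_submodule nva_vacuum[OF Gr_nonlocal_va] nva_Y_closed[OF Gr_nonlocal_va] by blast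
  moreover have "gr_hom V F 1 ` T \<subseteq> carrier (Gr V F)" using gr_hom_carrier T_F1 by auto
  ultimately show ?thesis
    using T_F1 Gr_carrier_subset_subalgebra[OF F_assoc T]
    unfolding generating_subset_def by blast
qed

end

theorem proposition2p10:
  fixes V :: "(complex, 'v) module" and vac :: 'v and Y :: "'v vop"
    and F :: "int \<Rightarrow> 'v set" and T :: "'v set"
  assumes nva: "nonlocal_va V vac Y"
    and subsp: "\<forall>n. submodule (F n) CR V"
    and incr: "\<forall>n. F n \<subseteq> F (n + 1)"
    and vac_F0: "vac \<in> F 0"
    and compat: "\<forall>a b k m n. a \<in> F k \<longrightarrow> b \<in> F n \<longrightarrow> Y a m b \<in> F (k + n - m - 1)"
  shows "\<exists>YG :: (int \<Rightarrow> 'v set) vop.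
           graded_nonlocal_va (Gr V F) (gr_hom V F 0 vac) YG (gr_grading V F) \<and>
           (\<forall>a b m n k. a \<in> F m \<longrightarrow> b \<in> F n \<longrightarrow>
              YG (gr_hom V F m a) k (gr_hom V F n b) = gr_hom V F (m + n - k - 1) (Y a k b)) \<and>
           ((generating_subset V vac Y T \<and> F = assoc_filtration V vac Y T) \<longrightarrow>
              T \<subseteq> F 1 \<and> generating_subset (Gr V F) (gr_hom V F 0 vac) YG (gr_hom V F 1 ` T))"
proof -
  interpret nva_filtration V vac Y F
    by (rule nva_filtration.intro) (use nva subsp incr vac_F0 compat in simp_all)
  show ?thesis
  proof (intro exI[of _ gr_Y] conjI allI impI)
    show "graded_nonlocal_va (Gr V F) (gr_hom V F 0 vac) gr_Y (gr_grading V F)"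
      by (rule Gr_graded_nonlocal_va)
    show "gr_Y (gr_hom V F m a) k (gr_hom V F n b) = gr_hom V F (m + n - k - 1) (Y a k b)"
      if "a \<in> F m" "b \<in> F n" for a b m n k
      using that by (rule gr_Y_hom)
  qed (use Gr_generating_subset in blast)+
qed

end
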